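(* Let $Y$ be a CARMA$(p,q)$ process with $p\le 3$, such that $\Re(\lambda_j)<0$ and $\Re(\mu_k)\ne0$ for all $j,k$ and the zeroes $\lambda_1,\dots,\lambda_p$ of $a$ are distinct, and let $\tilde Y^{\Delta,h}_n=\sum_{j=0}^\infty g(\Delta(j+h))\Delta L_{n-j}$ be its approximating Riemann sum with rule $h$. If $p=1$, then $\tilde Y^{\Delta,h}$ is an AR$(1)$ process $(1-e^{\Delta\lambda_1}B)\tilde Y^{\Delta,h}_n=Z^\Delta_n$ driven by $Z^\Delta_n=\sigma e^{\Delta h\lambda_1}\Delta L_n$. If $p\in\{2,3\}$ and $h\in(0,1)$, then as $\Delta\downarrow0$ $$\Phi_\Delta(B)\tilde Y^{\Delta,h}_n=\tilde\theta_0^{\Delta,h}\prod_{i=1}^q\big(1-(1-\Delta\mu_i+o(\Delta))B\big)\prod_{i=1}^{p-q-1}\big(1-\chi_{p-q,i}(h)B\big)\Delta L_n,\qquad \tilde\theta_0^{\Delta,h}=\sigma\frac{(h\Delta)^{p-q-1}}{(p-q-1)!}(1+o(1)),$$ where $$\chi_{2,1}(h)=\frac{h-1}{h}+o(1),\qquad \chi_{3,j}(h)=\frac{2(h-1)^2}{2(h-1)h-1-(-1)^j\sqrt{1-4(h-1)h}}+o(1),\quad j=1,2.$$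
   Context: $L$ is a two-sided Lévy process with $\mathbb{E}L_1=0$, $\mathbb{E}L_1^2=1$, and $\Delta L_n:=L_{n\Delta}-L_{(n-1)\Delta}$. CARMA setting: $p>q\ge0$ integers, $\sigma>0$, $a(z)=\prod_{i=1}^p(z-\lambda_i)$ monic of degree $p$ and $b(z)=\prod_{i=1}^q(z+\mu_i)$, both with real coefficients and no common zeroes; the kernel is $g(t)=\sigma\sum_\lambda\mathrm{Res}_{z=\lambda}(e^{zt}b(z)/a(z))$ for $t>0$ and $g(t)=0$ for $t\le0$ (sum over distinct zeroes of $a$). $\Phi_\Delta(z)=\prod_{i=1}^p(1-e^{\Delta\lambda_i}z)$ and $B$ is the backshift operator. The displayed identity is understood with the coefficients of the moving average polynomial given by their asymptotic expressions as $\Delta\downarrow0$. *)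

theory Defs
  imports "HOL-Complex_Analysis.Complex_Analysis" "HOL-Computational_Algebra.Polynomial"
begin

definition carma_a :: "(nat \<Rightarrow> complex) \<Rightarrow> nat \<Rightarrow> complex poly" where
  "carma_a lam p = (\<Prod>i<p. [:- lam i, 1:])"

definition carma_b :: "(nat \<Rightarrow> complex) \<Rightarrow> nat \<Rightarrow> complex poly" where
  "carma_b mu q = (\<Prod>i<q. [:mu i, 1:])"

definition carma_kernel :: "real \<Rightarrow> complex poly \<Rightarrow> complex poly \<Rightarrow> real \<Rightarrow> complex" where
  "carma_kernel \<sigma> a b t =
     (if t > 0 then of_real \<sigma> * (\<Sum>z\<in>{z. poly a z = 0}.
        residue (\<lambda>w. exp (w * of_real t) * poly b w / poly a w) z) else 0)"

definition Phi_Delta :: "(nat \<Rightarrow> complex) \<Rightarrow> nat \<Rightarrow> real \<Rightarrow> complex poly" where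
  "Phi_Delta lam p \<Delta> = (\<Prod>i<p. [:1, - exp (of_real \<Delta> * lam i):])"

definition poly_B :: "complex poly \<Rightarrow> (int \<Rightarrow> complex) \<Rightarrow> int \<Rightarrow> complex" where
  "poly_B P Y n = (\<Sum>k\<le>degree P. coeff P k * Y (n - int k))"

text \<open>Riemann sum approximation with rule h, driven by the increment sequence dL
  (dL n plays the role of Delta L_n = L_{n Delta} - L_{(n-1) Delta}).\<close>
definition riemann_sum ::
  "(real \<Rightarrow> complex) \<Rightarrow> real \<Rightarrow> real \<Rightarrow> (int \<Rightarrow> real) \<Rightarrow> int \<Rightarrow> complex" where
  "riemann_sum g \<Delta> h dL n = (\<Sum>j. g (\<Delta> * (real j + h)) * of_real (dL (n - int j)))"

definition riemann_summable ::
  "(real \<Rightarrow> complex) \<Rightarrow> real \<Rightarrow> real \<Rightarrow> (int \<Rightarrow> real) \<Rightarrow> bool" where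
  "riemann_summable g \<Delta> h dL =
     (\<forall>n. summable (\<lambda>j. g (\<Delta> * (real j + h)) * of_real (dL (n - int j))))"

text \<open>The limiting MA zeroes chi_{m,j}(h) (j starting at 1).\<close>
definition chi :: "nat \<Rightarrow> nat \<Rightarrow> real \<Rightarrow> real" where
  "chi m j h =
     (if m = 2 then (h - 1) / h
      else 2 * (h - 1)^2 / (2 * (h - 1) * h - 1 - (-1)^j * sqrt (1 - 4 * (h - 1) * h)))"

end

theory Submission
  imports Defs
begin

text \<open>The kernel \<open>g\<close> is a linear combination of the exponentials \<open>e ^ (\<lambda>\<^sub>i t)\<close>, and
  \<open>\<Phi>\<^sub>\<Delta>(B)\<close>, whose zeroes are the \<open>e ^ (- \<Delta> \<lambda>\<^sub>i)\<close>, annihilates each of them sampled on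
  the grid \<open>\<Delta> (j + h)\<close>. Hence \<open>\<Phi>\<^sub>\<Delta>(B) Y\<close> is a moving average of order \<open>p - 1\<close> of the
  increments, with coefficients \<open>\<theta>\<^sub>j(\<Delta>) = \<Sum>\<^bsub>k\<le>j\<^esub> \<phi>\<^sub>k g(\<Delta> (j - k + h))\<close>; for \<open>p = 1\<close> this is
  the AR(1) recursion. Each \<open>\<theta>\<^sub>j\<close> is again an exponential sum in \<open>\<Delta>\<close>, so its Taylor
  coefficients at \<open>\<Delta> = 0\<close> are explicit polynomials in \<open>\<lambda>\<close>, \<open>\<mu>\<close> and \<open>h\<close>. The lowest
  non-vanishing ones give the limits of suitably rescaled elementary symmetric functions of the
  roots of the MA polynomial. As its degree is at most 2, the roots converge to those of the
  limiting polynomial, and the roots tending to 1 are resolved at scale \<open>\<Delta>\<close>.\<close>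

section \<open>Filtering the Riemann sum\<close>

text \<open>\<open>MA_coeff lam p g h \<Delta> j\<close> is the coefficient \<open>\<theta>\<^sub>j(\<Delta>)\<close> of \<open>z ^ j\<close> in
  \<open>\<Phi>\<^sub>\<Delta>(z) \<Sum>\<^sub>j g(\<Delta> (j + h)) z ^ j\<close>.\<close>
definition MA_coeff :: "(nat \<Rightarrow> complex) \<Rightarrow> nat \<Rightarrow> (real \<Rightarrow> complex) \<Rightarrow> real \<Rightarrow> real \<Rightarrow> nat \<Rightarrow> complex" where
  "MA_coeff lam p g h \<Delta> j = (\<Sum>k\<le>j. coeff (Phi_Delta lam p \<Delta>) k * g (\<Delta> * (real (j - k) + h)))"

definition MA_poly :: "(nat \<Rightarrow> complex) \<Rightarrow> nat \<Rightarrow> (real \<Rightarrow> complex) \<Rightarrow> real \<Rightarrow> real \<Rightarrow> complex poly" where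
  "MA_poly lam p g h \<Delta> = Poly (map (MA_coeff lam p g h \<Delta>) [0..<p])"

lemma poly_B_eq_sum:
  assumes "\<And>k. k \<ge> N \<Longrightarrow> coeff P k = 0"
  shows "poly_B P Y n = (\<Sum>k<N. coeff P k * Y (n - int k))"
proof -
  have "poly_B P Y n = (\<Sum>k<degree P + N + 1. coeff P k * Y (n - int k))"
    unfolding poly_B_def by (intro sum.mono_neutral_left) (auto simp: coeff_eq_0)
  also have "\<dots> = (\<Sum>k<N. coeff P k * Y (n - int k))"
    using assms by (intro sum.mono_neutral_right) auto
  finally show ?thesis .
qed

lemma poly_B_MA_poly:
  "poly_B (MA_poly lam p g h \<Delta>) Y n = (\<Sum>j<p. MA_coeff lam p g h \<Delta> j * Y (n - int j))"
  unfolding MA_poly_def by (subst poly_B_eq_sum[of p]) (auto simp: nth_default_def)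

lemma poly_Phi_Delta: "poly (Phi_Delta lam p \<Delta>) x = (\<Prod>i<p. 1 - exp (of_real \<Delta> * lam i) * x)"
  unfolding Phi_Delta_def by (simp add: poly_prod mult.commute)

lemma degree_Phi_Delta: "degree (Phi_Delta lam p \<Delta>) = p"
  unfolding Phi_Delta_def by (subst degree_prod_eq_sum_degree) auto

lemma Phi_Delta_recurrence_exp:
  assumes "i < p" and "p \<le> j"
  shows "(\<Sum>k\<le>p. coeff (Phi_Delta lam p \<Delta>) k * exp (of_real \<Delta> * lam i) ^ (j - k)) = 0"
proof -
  define \<rho> where "\<rho> = exp (of_real \<Delta> * lam i)"
  have "\<rho> \<noteq> 0"
    by (simp add: \<rho>_def)
  have "(\<Sum>k\<le>p. coeff (Phi_Delta lam p \<Delta>) k * \<rho> ^ (j - k))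
      = \<rho> ^ j * (\<Sum>k\<le>p. coeff (Phi_Delta lam p \<Delta>) k * inverse \<rho> ^ k)"
    unfolding sum_distrib_left
    using \<open>p \<le> j\<close> \<open>\<rho> \<noteq> 0\<close> by (intro sum.cong) (simp_all add: power_diff power_inverse field_simps)
  also have "(\<Sum>k\<le>p. coeff (Phi_Delta lam p \<Delta>) k * inverse \<rho> ^ k) = poly (Phi_Delta lam p \<Delta>) (inverse \<rho>)"
    by (simp add: poly_altdef degree_Phi_Delta)
  also have "\<dots> = 0"
    unfolding poly_Phi_Delta using \<open>i < p\<close> \<open>\<rho> \<noteq> 0\<close> by (auto simp: \<rho>_def[symmetric] intro!: bexI[of _ i])
  finally show ?thesis
    by (simp add: \<rho>_def)
qed

lemma Phi_Delta_annihilates_exp_sum: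
  fixes g :: "real \<Rightarrow> complex"
  assumes g: "\<And>t. t > 0 \<Longrightarrow> g t = (\<Sum>i<p. B i * exp (lam i * of_real t))"
    and "\<Delta> > 0" and "h > 0" and "p \<le> j"
  shows "(\<Sum>k\<le>p. coeff (Phi_Delta lam p \<Delta>) k * g (\<Delta> * (real (j - k) + h))) = 0"
proof -
  define \<rho> where "\<rho> i = exp (of_real \<Delta> * lam i)" for i
  have grid: "g (\<Delta> * (real (j - k) + h)) = (\<Sum>i<p. B i * exp (lam i * of_real (\<Delta> * h)) * \<rho> i ^ (j - k))"
    for k
  proof -
    have shift: "B i * exp (lam i * of_real (\<Delta> * (real (j - k) + h)))
        = B i * exp (lam i * of_real (\<Delta> * h)) * \<rho> i ^ (j - k)" for i
    proof -
      have "lam i * of_real (\<Delta> * (real (j - k) + h))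
          = of_nat (j - k) * (of_real \<Delta> * lam i) + lam i * of_real (\<Delta> * h)"
        by (simp add: algebra_simps)
      then show ?thesis by (simp add: exp_add exp_of_nat_mult \<rho>_def)
    qed
    have "\<Delta> * (real (j - k) + h) > 0"
      using assms by simp
    then have "g (\<Delta> * (real (j - k) + h)) = (\<Sum>i<p. B i * exp (lam i * of_real (\<Delta> * (real (j - k) + h))))"
      by (rule g)
    also have "\<dots> = (\<Sum>i<p. B i * exp (lam i * of_real (\<Delta> * h)) * \<rho> i ^ (j - k))"
      by (rule sum.cong[OF refl]) (rule shift)
    finally show ?thesis .
  qed
  have "(\<Sum>k\<le>p. coeff (Phi_Delta lam p \<Delta>) k * g (\<Delta> * (real (j - k) + h)))
      = (\<Sum>i<p. B i * exp (lam i * of_real (\<Delta> * h)) *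
           (\<Sum>k\<le>p. coeff (Phi_Delta lam p \<Delta>) k * \<rho> i ^ (j - k)))"
    unfolding grid sum_distrib_left sum_distrib_right by (subst sum.swap) (simp add: mult_ac)
  also have "\<dots> = 0"
    using Phi_Delta_recurrence_exp[OF _ \<open>p \<le> j\<close>] by (simp add: \<rho>_def)
  finally show ?thesis .
qed

lemma sums_shift_right:
  fixes f :: "nat \<Rightarrow> 'a::real_normed_vector"
  assumes "f sums s"
  shows "(\<lambda>j. if k \<le> j then f (j - k) else 0) sums s"
proof -
  let ?f = "\<lambda>j. if k \<le> j then f (j - k) else 0"
  have "(\<lambda>i. ?f (i + k)) = f" by auto
  with assms have "?f sums (s + (\<Sum>i<k. ?f i))"
    using sums_iff_shift[of ?f k s] by simp
  then show ?thesis by simp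
qed

lemma Phi_Delta_riemann_sum:
  fixes g :: "real \<Rightarrow> complex"
  assumes g: "\<And>t. t > 0 \<Longrightarrow> g t = (\<Sum>i<p. B i * exp (lam i * of_real t))"
    and "\<Delta> > 0" and "h > 0" and summable: "riemann_summable g \<Delta> h dL"
  shows "poly_B (Phi_Delta lam p \<Delta>) (riemann_sum g \<Delta> h dL) n
       = poly_B (MA_poly lam p g h \<Delta>) (\<lambda>m. of_real (dL m)) n"
proof -
  define \<phi> where "\<phi> k = coeff (Phi_Delta lam p \<Delta>) k" for k
  define G where "G k j = (if k \<le> j then g (\<Delta> * (real (j - k) + h)) * of_real (dL (n - int j)) else 0)"
    for k j
  have G_sums: "G k sums riemann_sum g \<Delta> h dL (n - int k)" for k
  proof -
    have "(\<lambda>j. g (\<Delta> * (real j + h)) * of_real (dL (n - int k - int j))) sums riemann_sum g \<Delta> h dL (n - int k)"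
      using summable unfolding riemann_summable_def riemann_sum_def by (simp add: summable_sums)
    from sums_shift_right[OF this, of k] show ?thesis
      unfolding G_def by (rule back_subst[where P = "\<lambda>f. f sums _"]) (auto simp: of_nat_diff)
  qed
  have "(\<lambda>j. \<Sum>k\<le>p. \<phi> k * G k j) sums (\<Sum>k\<le>p. \<phi> k * riemann_sum g \<Delta> h dL (n - int k))"
    by (intro sums_sum sums_mult G_sums)
  moreover have "(\<lambda>j. \<Sum>k\<le>p. \<phi> k * G k j) sums (\<Sum>j<p. \<Sum>k\<le>p. \<phi> k * G k j)"
  proof (rule sums_finite)
    fix j assume "j \<notin> {..<p}"
    then have "(\<Sum>k\<le>p. \<phi> k * G k j) = (\<Sum>k\<le>p. \<phi> k * g (\<Delta> * (real (j - k) + h))) * of_real (dL (n - int j))"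
      unfolding sum_distrib_right G_def by (intro sum.cong) auto
    then show "(\<Sum>k\<le>p. \<phi> k * G k j) = 0"
      using Phi_Delta_annihilates_exp_sum[OF g assms(2,3)] \<open>j \<notin> {..<p}\<close> by (simp add: \<phi>_def)
  qed simp
  ultimately have "(\<Sum>k\<le>p. \<phi> k * riemann_sum g \<Delta> h dL (n - int k)) = (\<Sum>j<p. \<Sum>k\<le>p. \<phi> k * G k j)"
    using sums_unique2 by blast
  also have "\<dots> = (\<Sum>j<p. MA_coeff lam p g h \<Delta> j * of_real (dL (n - int j)))"
  proof (rule sum.cong[OF refl])
    fix j assume "j \<in> {..<p}"
    then have "(\<Sum>k\<le>p. \<phi> k * G k j) = (\<Sum>k\<le>j. \<phi> k * G k j)"
      by (intro sum.mono_neutral_right) (auto simp: G_def)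
    also have "\<dots> = MA_coeff lam p g h \<Delta> j * of_real (dL (n - int j))"
      unfolding MA_coeff_def sum_distrib_right by (intro sum.cong) (auto simp: G_def \<phi>_def)
    finally show "(\<Sum>k\<le>p. \<phi> k * G k j) = MA_coeff lam p g h \<Delta> j * of_real (dL (n - int j))" .
  qed
  finally show ?thesis
    unfolding poly_B_MA_poly poly_B_def[of "Phi_Delta lam p \<Delta>"] degree_Phi_Delta \<phi>_def .
qed

section \<open>The CARMA kernel\<close>

lemma poly_carma_a: "poly (carma_a lam p) z = (\<Prod>i<p. z - lam i)"
  by (simp add: carma_a_def poly_prod)

lemma carma_kernel_eq_sum_exp:
  assumes inj: "inj_on lam {..<p}" and "t > 0"
  shows "carma_kernel \<sigma> (carma_a lam p) b t =
    (\<Sum>i<p. of_real \<sigma> * poly b (lam i) / (\<Prod>k\<in>{..<p}-{i}. lam i - lam k) * exp (lam i * of_real t))"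
proof -
  have zeros: "{z. poly (carma_a lam p) z = 0} = lam ` {..<p}"
    by (auto simp: poly_carma_a)
  have "residue (\<lambda>w. exp (w * of_real t) * poly b w / poly (carma_a lam p) w) (lam i)
      = poly b (lam i) / (\<Prod>k\<in>{..<p}-{i}. lam i - lam k) * exp (lam i * of_real t)"
    if "i < p" for i
  proof -
    define Q where "Q w = (\<Prod>k\<in>{..<p}-{i}. w - lam k)" for w
    define S where "S = - (lam ` ({..<p}-{i}))"
    have "poly (carma_a lam p) w = (w - lam i) * Q w" for w
      unfolding poly_carma_a Q_def using that by (subst prod.remove[of _ i]) auto
    then have f: "(\<lambda>w. exp (w * of_real t) * poly b w / poly (carma_a lam p) w)
        = (\<lambda>w. (exp (w * of_real t) * poly b w / Q w) / (w - lam i))"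
      by (auto simp: divide_divide_eq_left mult.commute)
    have "open S"
      unfolding S_def by (intro open_Compl finite_imp_closed) auto
    moreover have "lam i \<in> S"
      unfolding S_def using inj that by (auto simp: inj_on_def)
    moreover have "(\<lambda>w. exp (w * of_real t) * poly b w / Q w) holomorphic_on S"
      unfolding Q_def S_def by (intro holomorphic_intros) auto
    ultimately show ?thesis
      by (simp only: f residue_simple) (simp add: Q_def)
  qed
  then show ?thesis
    unfolding carma_kernel_def using \<open>t > 0\<close>
    by (simp add: zeros sum.reindex[OF inj] sum_distrib_left mult_ac)
qed

lemma riemann_sum_AR1:
  fixes \<sigma> h \<Delta> :: real and lam mu :: "nat \<Rightarrow> complex"
  defines "g \<equiv> carma_kernel \<sigma> (carma_a lam 1) (carma_b mu 0)"
  assumes "\<Delta> > 0" and "h > 0" and "riemann_summable g \<Delta> h dL"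
  shows "riemann_sum g \<Delta> h dL n - exp (of_real \<Delta> * lam 0) * riemann_sum g \<Delta> h dL (n - 1)
       = of_real \<sigma> * exp (of_real (\<Delta> * h) * lam 0) * of_real (dL n)"
proof -
  have g: "g t = (\<Sum>i<1. of_real \<sigma> * exp (lam i * of_real t))" if "t > 0" for t
    using carma_kernel_eq_sum_exp[of lam 1 t \<sigma> "carma_b mu 0"] that by (simp add: g_def carma_b_def inj_on_def)
  have "riemann_sum g \<Delta> h dL n - exp (of_real \<Delta> * lam 0) * riemann_sum g \<Delta> h dL (n - 1)
      = poly_B (Phi_Delta lam 1 \<Delta>) (riemann_sum g \<Delta> h dL) n"
    by (subst poly_B_eq_sum[of 2]) (simp_all add: Phi_Delta_def coeff_eq_0 numeral_2_eq_2)
  also have "\<dots> = poly_B (MA_poly lam 1 g h \<Delta>) (\<lambda>m. of_real (dL m)) n"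
    using g assms(2-4) by (rule Phi_Delta_riemann_sum)
  also have "\<dots> = g (\<Delta> * h) * of_real (dL n)"
    by (simp add: poly_B_MA_poly MA_coeff_def Phi_Delta_def)
  also have "\<dots> = of_real \<sigma> * exp (of_real (\<Delta> * h) * lam 0) * of_real (dL n)"
    using g[of "\<Delta> * h"] assms(2,3) by (simp add: mult.commute)
  finally show ?thesis .
qed

section \<open>Exponential sums and their Taylor coefficients\<close>

text \<open>An exponential sum \<open>\<Sum> c e ^ (k z)\<close> is kept as the list of its pairs \<open>(c, k)\<close>, and
  \<open>exp_moment xs n\<close> is its \<open>n\<close>-th derivative at 0.\<close>
definition exp_sum :: "(complex \<times> complex) list \<Rightarrow> complex \<Rightarrow> complex" where
  "exp_sum xs z = (\<Sum>(c, k)\<leftarrow>xs. c * exp (k * z))"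

definition exp_moment :: "(complex \<times> complex) list \<Rightarrow> nat \<Rightarrow> complex" where
  "exp_moment xs n = (\<Sum>(c, k)\<leftarrow>xs. c * k ^ n)"

definition exp_list_mult ::
  "(complex \<times> complex) list \<Rightarrow> (complex \<times> complex) list \<Rightarrow> (complex \<times> complex) list" where
  "exp_list_mult xs ys = concat (map (\<lambda>(c, k). map (\<lambda>(d, l). (c * d, k + l)) ys) xs)"

definition exp_list_dilate :: "complex \<Rightarrow> (complex \<times> complex) list \<Rightarrow> (complex \<times> complex) list" where
  "exp_list_dilate a xs = map (\<lambda>(c, k). (c, k * a)) xs"

lemma exp_sum_Nil [simp]: "exp_sum [] z = 0"
  by (simp add: exp_sum_def)

lemma exp_sum_Cons [simp]: "exp_sum ((c, k) # xs) z = c * exp (k * z) + exp_sum xs z"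
  by (simp add: exp_sum_def)

lemma exp_sum_append [simp]: "exp_sum (xs @ ys) z = exp_sum xs z + exp_sum ys z"
  by (simp add: exp_sum_def)

lemma exp_sum_concat: "exp_sum (concat xss) z = (\<Sum>xs\<leftarrow>xss. exp_sum xs z)"
  by (induction xss) auto

lemma exp_sum_dilate [simp]: "exp_sum (exp_list_dilate a xs) z = exp_sum xs (a * z)"
  by (induction xs) (auto simp: exp_list_dilate_def mult.assoc)

lemma exp_sum_mult [simp]: "exp_sum (exp_list_mult xs ys) z = exp_sum xs z * exp_sum ys z"
proof (induction xs)
  case Nil
  then show ?case by (simp add: exp_list_mult_def)
next
  case (Cons a xs)
  obtain c k where a: "a = (c, k)" by force
  have "exp_sum (map (\<lambda>(d, l). (c * d, k + l)) ys) z = c * exp (k * z) * exp_sum ys z"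
    by (induction ys) (auto simp: distrib_left distrib_right exp_add mult_ac)
  with Cons show ?case by (simp add: a exp_list_mult_def distrib_right)
qed

lemma exp_moment_append [simp]: "exp_moment (xs @ ys) n = exp_moment xs n + exp_moment ys n"
  by (simp add: exp_moment_def)

lemma exp_sum_sums: "(\<lambda>n. exp_moment xs n / fact n * z ^ n) sums exp_sum xs z"
proof (induction xs)
  case Nil
  then show ?case by (simp add: exp_moment_def)
next
  case (Cons a xs)
  obtain c k where a: "a = (c, k)" by force
  have "(\<lambda>n. (k * z) ^ n /\<^sub>R fact n) sums exp (k * z)"
    by (rule exp_converges)
  hence "(\<lambda>n. c * ((k * z) ^ n /\<^sub>R fact n)) sums (c * exp (k * z))"
    by (rule sums_mult)
  from sums_add[OF this Cons.IH] show ?case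
    by (simp add: a exp_moment_def scaleR_conv_of_real field_simps)
qed

lemma tendsto_exp_sum_div_power:
  assumes "\<forall>n<m. exp_moment xs n = 0"
  shows "((\<lambda>z. exp_sum xs z / z ^ m) \<longlongrightarrow> exp_moment xs m / fact m) (at 0)"
proof -
  define a where "a n = exp_moment xs (n + m) / fact (n + m)" for n
  have "(\<lambda>n. a n * z ^ n) sums (exp_sum xs z / z ^ m)" if "z \<noteq> 0" for z
  proof -
    have "(\<lambda>n. exp_moment xs (n + m) / fact (n + m) * z ^ (n + m)) sums exp_sum xs z"
      using exp_sum_sums[of xs z] assms by (subst sums_iff_shift) simp
    from sums_divide[OF this, of "z ^ m"] show ?thesis
      using that by (simp add: a_def power_add)
  qed
  from powser_limit_0_strong[of 1 a, OF _ this] show ?thesis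
    by (simp add: a_def)
qed

lemma tendsto_exp_sum_div_power_at_right:
  assumes "\<And>\<Delta>. \<Delta> > 0 \<Longrightarrow> f \<Delta> = c * exp_sum xs (of_real \<Delta>)"
    and "\<forall>n<m. exp_moment xs n = 0"
  shows "((\<lambda>\<Delta>. f \<Delta> / of_real \<Delta> ^ m) \<longlongrightarrow> c * exp_moment xs m / fact m) (at_right 0)"
proof -
  have "filterlim (\<lambda>\<Delta>::real. complex_of_real \<Delta>) (at 0) (at_right 0)"
    using eventually_at_right_less[of 0]
    by (auto simp: filterlim_at intro!: tendsto_eq_intros elim: eventually_mono)
  from tendsto_mult_left[OF filterlim_compose[OF tendsto_exp_sum_div_power[OF assms(2)] this], of c]
  have "((\<lambda>\<Delta>. c * (exp_sum xs (of_real \<Delta>) / of_real \<Delta> ^ m)) \<longlongrightarrow> c * exp_moment xs m / fact m) (at_right 0)"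
    by simp
  then show ?thesis
    by (rule Lim_transform_eventually)
      (use eventually_at_right_less[of 0] assms(1) in \<open>auto elim: eventually_mono\<close>)
qed

primrec Phi_list :: "(nat \<Rightarrow> complex) \<Rightarrow> nat \<Rightarrow> nat \<Rightarrow> (complex \<times> complex) list" where
  "Phi_list lam 0 k = (if k = 0 then [(1, 0)] else [])"
| "Phi_list lam (Suc p) k = Phi_list lam p k @
     (case k of 0 \<Rightarrow> [] | Suc k' \<Rightarrow> exp_list_mult [(-1, lam p)] (Phi_list lam p k'))"

lemma coeff_Phi_Delta: "coeff (Phi_Delta lam p \<Delta>) k = exp_sum (Phi_list lam p k) (of_real \<Delta>)"
proof (induction p arbitrary: k)
  case 0
  then show ?case by (simp add: Phi_Delta_def coeff_1)
next
  case (Suc p)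
  have "Phi_Delta lam (Suc p) \<Delta> = [:1, - exp (of_real \<Delta> * lam p):] * Phi_Delta lam p \<Delta>"
    by (simp add: Phi_Delta_def)
  also have "\<dots> = Phi_Delta lam p \<Delta> + pCons 0 (smult (- exp (of_real \<Delta> * lam p)) (Phi_Delta lam p \<Delta>))"
    by simp
  finally show ?case
    by (cases k) (simp_all add: Suc.IH coeff_pCons mult.commute)
qed

definition MA_list ::
  "(nat \<Rightarrow> complex) \<Rightarrow> nat \<Rightarrow> (complex \<times> complex) list \<Rightarrow> real \<Rightarrow> nat \<Rightarrow> (complex \<times> complex) list" where
  "MA_list lam p K h j =
     concat (map (\<lambda>k. exp_list_mult (Phi_list lam p k) (exp_list_dilate (of_real (real (j - k) + h)) K)) [0..<Suc j])"

lemma MA_coeff_exp_sum: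
  assumes "\<And>t. t > 0 \<Longrightarrow> g t = c * exp_sum K (of_real t)" and "\<Delta> > 0" and "h > 0"
  shows "MA_coeff lam p g h \<Delta> j = c * exp_sum (MA_list lam p K h j) (of_real \<Delta>)"
proof -
  define F where "F k = exp_list_mult (Phi_list lam p k) (exp_list_dilate (of_real (real (j - k) + h)) K)" for k
  have "coeff (Phi_Delta lam p \<Delta>) k * g (\<Delta> * (real (j - k) + h)) = c * exp_sum (F k) (of_real \<Delta>)" for k
    using assms by (simp add: F_def coeff_Phi_Delta mult_ac)
  then have "MA_coeff lam p g h \<Delta> j = (\<Sum>k\<in>set [0..<Suc j]. c * exp_sum (F k) (of_real \<Delta>))"
    unfolding MA_coeff_def by (intro sum.cong) auto
  also have "\<dots> = c * exp_sum (MA_list lam p K h j) (of_real \<Delta>)"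
    by (simp only: sum_set_upt_conv_sum_list_nat sum_list_const_mult MA_list_def exp_sum_concat
        map_map o_def F_def)
  finally show ?thesis .
qed

text \<open>The factors \<open>1 / a'(\<lambda>\<^sub>i)\<close> are put over a common denominator, so that the exponential
  sums below have coefficients polynomial in \<open>\<lambda>\<close> and \<open>\<mu>\<close>, and their moments are ring identities.\<close>
lemma carma_kernel_2:
  assumes "lam 0 \<noteq> lam 1" and "t > 0"
  shows "carma_kernel \<sigma> (carma_a lam 2) b t =
    of_real \<sigma> / (lam 0 - lam 1) * exp_sum [(poly b (lam 0), lam 0), (- poly b (lam 1), lam 1)] (of_real t)"
proof -
  have "inj_on lam {..<2}"
    using assms by (auto simp: inj_on_def less_2_cases_iff)
  moreover have "{..<2::nat} = {0, 1}" by auto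
  ultimately have "carma_kernel \<sigma> (carma_a lam 2) b t =
      of_real \<sigma> * poly b (lam 0) / (lam 0 - lam 1) * exp (lam 0 * of_real t) +
      of_real \<sigma> * poly b (lam 1) / (lam 1 - lam 0) * exp (lam 1 * of_real t)"
    using carma_kernel_eq_sum_exp[OF _ \<open>t > 0\<close>, of lam 2 \<sigma> b] by (simp add: insert_Diff_if)
  also have "\<dots> = of_real \<sigma> / (lam 0 - lam 1) *
      exp_sum [(poly b (lam 0), lam 0), (- poly b (lam 1), lam 1)] (of_real t)"
  proof -
    obtain A where A: "lam 0 - lam 1 = A" by blast
    have "A \<noteq> 0" and neg: "lam 1 - lam 0 = - A"
      using assms A by auto
    then show ?thesis
      unfolding A neg by (simp add: field_simps)
  qed
  finally show ?thesis .
qed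

lemma carma_kernel_3:
  assumes "lam 0 \<noteq> lam 1" "lam 0 \<noteq> lam 2" "lam 1 \<noteq> lam 2" and "t > 0"
  shows "carma_kernel \<sigma> (carma_a lam 3) b t =
    of_real \<sigma> / ((lam 0 - lam 1) * (lam 0 - lam 2) * (lam 1 - lam 2)) *
    exp_sum [((lam 1 - lam 2) * poly b (lam 0), lam 0), (- ((lam 0 - lam 2) * poly b (lam 1)), lam 1),
             ((lam 0 - lam 1) * poly b (lam 2), lam 2)] (of_real t)"
proof -
  have "inj_on lam {..<3}"
    using assms by (auto simp: inj_on_def eval_nat_numeral less_Suc_eq)
  moreover have "{..<3::nat} = {0, 1, 2}" by auto
  ultimately have "carma_kernel \<sigma> (carma_a lam 3) b t =
      of_real \<sigma> * poly b (lam 0) / ((lam 0 - lam 1) * (lam 0 - lam 2)) * exp (lam 0 * of_real t) +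
      (of_real \<sigma> * poly b (lam 1) / ((lam 1 - lam 0) * (lam 1 - lam 2)) * exp (lam 1 * of_real t) +
       of_real \<sigma> * poly b (lam 2) / ((lam 2 - lam 0) * (lam 2 - lam 1)) * exp (lam 2 * of_real t))"
    using carma_kernel_eq_sum_exp[OF _ \<open>t > 0\<close>, of lam 3 \<sigma> b] by (simp add: insert_Diff_if)
  also have "\<dots> = of_real \<sigma> / ((lam 0 - lam 1) * (lam 0 - lam 2) * (lam 1 - lam 2)) *
      exp_sum [((lam 1 - lam 2) * poly b (lam 0), lam 0), (- ((lam 0 - lam 2) * poly b (lam 1)), lam 1),
               ((lam 0 - lam 1) * poly b (lam 2), lam 2)] (of_real t)"
  proof -
    obtain A B C where ABC: "lam 0 - lam 1 = A" "lam 0 - lam 2 = B" "lam 1 - lam 2 = C"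
      by blast
    have "A \<noteq> 0" "B \<noteq> 0" "C \<noteq> 0"
      and neg: "lam 1 - lam 0 = - A" "lam 2 - lam 0 = - B" "lam 2 - lam 1 = - C"
      using assms ABC by auto
    then show ?thesis
      unfolding ABC neg by (simp add: field_simps)
  qed
  finally show ?thesis .
qed

section \<open>Moving average polynomials with convergent coefficients\<close>

text \<open>The \<open>o(\<Delta>)\<close> and \<open>o(1)\<close> corrections of the statement appear as \<open>\<Delta> \<epsilon>\<^sub>i(\<Delta>)\<close> and
  \<open>\<eta>\<^sub>i(\<Delta>)\<close>, with \<open>\<epsilon>\<^sub>i, \<eta>\<^sub>i \<rightarrow> 0\<close>.\<close>
definition has_MA_expansion ::
  "nat \<Rightarrow> nat \<Rightarrow> real \<Rightarrow> real \<Rightarrow> (nat \<Rightarrow> complex) \<Rightarrow> (real \<Rightarrow> complex poly) \<Rightarrow> bool" where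
  "has_MA_expansion p q \<sigma> h mu \<Theta> \<longleftrightarrow>
     (\<exists>\<theta>0 :: real \<Rightarrow> complex. \<exists>\<delta> :: real \<Rightarrow> complex.
      \<exists>\<epsilon> :: nat \<Rightarrow> real \<Rightarrow> complex. \<exists>\<eta> :: nat \<Rightarrow> real \<Rightarrow> complex.
        (\<delta> \<longlongrightarrow> 0) (at_right 0) \<and>
        (\<forall>i<q. (\<epsilon> i \<longlongrightarrow> 0) (at_right 0)) \<and>
        (\<forall>i\<in>{1..p - q - 1}. (\<eta> i \<longlongrightarrow> 0) (at_right 0)) \<and>
        (\<forall>\<^sub>F \<Delta> in at_right 0.
           \<theta>0 \<Delta> = of_real (\<sigma> * (h * \<Delta>) ^ (p - q - 1) / fact (p - q - 1)) * (1 + \<delta> \<Delta>) \<and>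
           \<Theta> \<Delta> = smult (\<theta>0 \<Delta>)
             ((\<Prod>i<q. [:1, - (1 - of_real \<Delta> * mu i + of_real \<Delta> * \<epsilon> i \<Delta>):]) *
              (\<Prod>i\<in>{1..p - q - 1}. [:1, - (of_real (chi (p - q) i h) + \<eta> i \<Delta>):]))))"

lemma has_MA_expansionI:
  fixes a :: "real \<Rightarrow> complex"
  assumes "\<sigma> > 0" and "h > 0"
    and a: "((\<lambda>\<Delta>. a \<Delta> / of_real \<Delta> ^ (p - q - 1)) \<longlongrightarrow> of_real (\<sigma> * h ^ (p - q - 1) / fact (p - q - 1)))
              (at_right 0)"
    and "\<forall>i<q. (\<epsilon> i \<longlongrightarrow> 0) (at_right 0)" and "\<forall>i\<in>{1..p - q - 1}. (\<eta> i \<longlongrightarrow> 0) (at_right 0)"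
    and "\<forall>\<^sub>F \<Delta> in at_right 0. \<Theta> \<Delta> = smult (a \<Delta>)
             ((\<Prod>i<q. [:1, - (1 - of_real \<Delta> * mu i + of_real \<Delta> * \<epsilon> i \<Delta>):]) *
              (\<Prod>i\<in>{1..p - q - 1}. [:1, - (of_real (chi (p - q) i h) + \<eta> i \<Delta>):]))"
  shows "has_MA_expansion p q \<sigma> h mu \<Theta>"
proof -
  define m where "m = p - q - 1"
  define c :: complex where "c = of_real (\<sigma> * h ^ m / fact m)"
  define \<delta> where "\<delta> \<Delta> = a \<Delta> / of_real (\<sigma> * (h * \<Delta>) ^ m / fact m) - 1" for \<Delta>
  have "c \<noteq> 0"
    using assms by (simp add: c_def)
  have "((\<lambda>\<Delta>. (a \<Delta> / of_real \<Delta> ^ m) / c - 1) \<longlongrightarrow> c / c - 1) (at_right 0)"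
    using a unfolding m_def[symmetric] c_def[symmetric] by (intro tendsto_intros) (use \<open>c \<noteq> 0\<close> in auto)
  moreover have "\<forall>\<^sub>F \<Delta> in at_right 0. (a \<Delta> / of_real \<Delta> ^ m) / c - 1 = \<delta> \<Delta>"
    using eventually_at_right_less[of 0]
    by eventually_elim (simp add: \<delta>_def c_def power_mult_distrib)
  ultimately have "(\<delta> \<longlongrightarrow> 0) (at_right 0)"
    using \<open>c \<noteq> 0\<close> by (simp add: tendsto_cong)
  moreover have "\<forall>\<^sub>F \<Delta> in at_right 0. a \<Delta> = of_real (\<sigma> * (h * \<Delta>) ^ m / fact m) * (1 + \<delta> \<Delta>)"
    using eventually_at_right_less[of 0] by eventually_elim (use assms in \<open>simp add: \<delta>_def\<close>)
  ultimately show ?thesis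
    unfolding has_MA_expansion_def m_def using assms(4-5) eventually_conj[OF _ assms(6)]
    by blast
qed

lemma tendsto_ratio_at_right:
  fixes f g :: "real \<Rightarrow> complex"
  assumes "((\<lambda>\<Delta>. f \<Delta> / of_real \<Delta> ^ m) \<longlongrightarrow> L) (at_right 0)"
    and "((\<lambda>\<Delta>. g \<Delta> / of_real \<Delta> ^ m) \<longlongrightarrow> M) (at_right 0)" and "M \<noteq> 0"
  shows "((\<lambda>\<Delta>. f \<Delta> / g \<Delta>) \<longlongrightarrow> L / M) (at_right 0)"
proof -
  have "\<forall>\<^sub>F \<Delta> in at_right 0. (f \<Delta> / of_real \<Delta> ^ m) / (g \<Delta> / of_real \<Delta> ^ m) = f \<Delta> / g \<Delta>"
    using eventually_at_right_less[of 0] by eventually_elim simp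
  from tendsto_cong[OF this] tendsto_divide[OF assms] show ?thesis by simp
qed

lemma tendsto_ratio_of_real_at_right:
  fixes f g :: "real \<Rightarrow> complex"
  assumes "((\<lambda>\<Delta>. f \<Delta> / of_real \<Delta> ^ m) \<longlongrightarrow> of_real x) (at_right 0)"
    and "((\<lambda>\<Delta>. g \<Delta> / of_real \<Delta> ^ m) \<longlongrightarrow> of_real y) (at_right 0)" and "y \<noteq> 0"
  shows "((\<lambda>\<Delta>. f \<Delta> / g \<Delta>) \<longlongrightarrow> of_real (x / y)) (at_right 0)"
  using tendsto_ratio_at_right[OF assms(1,2)] assms(3) by simp

lemma eventually_nonzero_at_right:
  fixes f :: "real \<Rightarrow> complex"
  assumes "((\<lambda>\<Delta>. f \<Delta> / of_real \<Delta> ^ m) \<longlongrightarrow> L) (at_right 0)" and "L \<noteq> 0"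
  shows "\<forall>\<^sub>F \<Delta> in at_right 0. \<Delta> > 0 \<and> f \<Delta> \<noteq> 0"
  using tendsto_imp_eventually_ne[OF assms] eventually_at_right_less[of 0]
  by eventually_elim auto

lemma has_MA_expansion_2_0:
  fixes a b :: "real \<Rightarrow> complex"
  assumes "\<sigma> > 0" and "h > 0"
    and a: "((\<lambda>\<Delta>. a \<Delta> / of_real \<Delta>) \<longlongrightarrow> of_real (\<sigma> * h)) (at_right 0)"
    and b: "((\<lambda>\<Delta>. b \<Delta> / of_real \<Delta>) \<longlongrightarrow> of_real (\<sigma> * (1 - h))) (at_right 0)"
  shows "has_MA_expansion 2 0 \<sigma> h mu (\<lambda>\<Delta>. [:a \<Delta>, b \<Delta>:])"
proof -
  define \<eta> :: "nat \<Rightarrow> real \<Rightarrow> complex" where "\<eta> = (\<lambda>i \<Delta>. - b \<Delta> / a \<Delta> - of_real (chi 2 1 h))"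
  have nz: "of_real (\<sigma> * h) \<noteq> (0 :: complex)"
    using assms by simp
  have a1: "((\<lambda>\<Delta>. a \<Delta> / of_real \<Delta> ^ 1) \<longlongrightarrow> of_real (\<sigma> * h)) (at_right 0)"
    and b1: "((\<lambda>\<Delta>. b \<Delta> / of_real \<Delta> ^ 1) \<longlongrightarrow> of_real (\<sigma> * (1 - h))) (at_right 0)"
    using a b by simp_all
  have "(\<sigma> * (1 - h)) / (\<sigma> * h) = - chi 2 1 h"
    using assms by (simp add: chi_def field_simps)
  then have "((\<lambda>\<Delta>. - (b \<Delta> / a \<Delta>)) \<longlongrightarrow> of_real (chi 2 1 h)) (at_right 0)"
    using tendsto_minus[OF tendsto_ratio_of_real_at_right[OF b1 a1]] assms by simp
  then have "(\<eta> i \<longlongrightarrow> 0) (at_right 0)" for i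
    unfolding \<eta>_def by (intro LIM_zero) simp
  moreover have "\<forall>\<^sub>F \<Delta> in at_right 0. [:a \<Delta>, b \<Delta>:] = smult (a \<Delta>) [:1, - (of_real (chi 2 1 h) + \<eta> 1 \<Delta>):]"
    using eventually_nonzero_at_right[OF a1 nz] by eventually_elim (simp add: \<eta>_def)
  ultimately show ?thesis
    using assms a by (intro has_MA_expansionI[where a = a and \<eta> = \<eta>]) simp_all
qed

lemma has_MA_expansion_2_1:
  fixes a b :: "real \<Rightarrow> complex"
  assumes "\<sigma> > 0" and "h > 0"
    and a: "(a \<longlongrightarrow> of_real \<sigma>) (at_right 0)"
    and ab: "((\<lambda>\<Delta>. (a \<Delta> + b \<Delta>) / of_real \<Delta>) \<longlongrightarrow> of_real \<sigma> * mu 0) (at_right 0)"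
  shows "has_MA_expansion 2 1 \<sigma> h mu (\<lambda>\<Delta>. [:a \<Delta>, b \<Delta>:])"
proof -
  define \<epsilon> :: "nat \<Rightarrow> real \<Rightarrow> complex" where "\<epsilon> = (\<lambda>i \<Delta>. mu 0 - (a \<Delta> + b \<Delta>) / of_real \<Delta> / a \<Delta>)"
  have nz: "of_real \<sigma> \<noteq> (0 :: complex)"
    using assms by simp
  have a0: "((\<lambda>\<Delta>. a \<Delta> / of_real \<Delta> ^ 0) \<longlongrightarrow> of_real \<sigma>) (at_right 0)"
    using a by simp
  have "((\<lambda>\<Delta>. mu 0 - (a \<Delta> + b \<Delta>) / of_real \<Delta> / a \<Delta>) \<longlongrightarrow> mu 0 - of_real \<sigma> * mu 0 / of_real \<sigma>) (at_right 0)"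
    using a ab nz by (intro tendsto_intros) auto
  then have "(\<epsilon> i \<longlongrightarrow> 0) (at_right 0)" for i
    using nz unfolding \<epsilon>_def by simp
  moreover have "\<forall>\<^sub>F \<Delta> in at_right 0.
      [:a \<Delta>, b \<Delta>:] = smult (a \<Delta>) [:1, - (1 - of_real \<Delta> * mu 0 + of_real \<Delta> * \<epsilon> 0 \<Delta>):]"
    using eventually_nonzero_at_right[OF a0 nz] by eventually_elim (simp add: \<epsilon>_def field_simps)
  ultimately show ?thesis
    using assms a by (intro has_MA_expansionI[where a = a and \<epsilon> = \<epsilon>]) simp_all
qed

lemma square_root_near:
  fixes X D :: complex
  shows "\<exists>w. w ^ 2 = X \<and> cmod (w - D) \<le> sqrt (cmod (X - D ^ 2))"
proof -
  define w where "w = (if cmod (csqrt X - D) \<le> cmod (csqrt X + D) then csqrt X else - csqrt X)"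
  have closer: "cmod (w - D) \<le> cmod (w + D)"
  proof -
    have "cmod (- csqrt X - D) = cmod (csqrt X + D)" "cmod (- csqrt X + D) = cmod (csqrt X - D)"
      using norm_minus_cancel[of "csqrt X + D"] norm_minus_commute[of D "csqrt X"] by simp_all
    then show ?thesis
      by (auto simp: w_def)
  qed
  have "cmod (w - D) ^ 2 \<le> cmod (w - D) * cmod (w + D)"
    using closer by (simp add: power2_eq_square mult_left_mono)
  also have "\<dots> = cmod (w ^ 2 - D ^ 2)"
    by (simp add: norm_mult[symmetric] power2_eq_square algebra_simps)
  finally have "cmod (w - D) \<le> sqrt (cmod (w ^ 2 - D ^ 2))"
    by (rule real_le_rsqrt)
  moreover have "w ^ 2 = X"
    by (simp add: w_def)
  ultimately show ?thesis
    by auto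
qed

lemma quadratic_roots_tendsto:
  fixes S P :: "'a \<Rightarrow> complex" and c1 c2 :: complex
  assumes S: "(S \<longlongrightarrow> c1 + c2) F" and P: "(P \<longlongrightarrow> c1 * c2) F"
  shows "\<exists>x1 x2. (\<forall>z. x1 z + x2 z = S z \<and> x1 z * x2 z = P z) \<and> (x1 \<longlongrightarrow> c1) F \<and> (x2 \<longlongrightarrow> c2) F"
proof -
  define D where "D = c1 - c2"
  have "\<forall>z. \<exists>v. v ^ 2 = S z ^ 2 - 4 * P z \<and> cmod (v - D) \<le> sqrt (cmod (S z ^ 2 - 4 * P z - D ^ 2))"
    using square_root_near by blast
  from choice[OF this] obtain w where w: "\<And>z. w z ^ 2 = S z ^ 2 - 4 * P z"
    and near: "\<And>z. cmod (w z - D) \<le> sqrt (cmod (S z ^ 2 - 4 * P z - D ^ 2))"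
    by blast
  have "((\<lambda>z. S z ^ 2 - 4 * P z - D ^ 2) \<longlongrightarrow> (c1 + c2) ^ 2 - 4 * (c1 * c2) - D ^ 2) F"
    by (intro tendsto_intros S P)
  moreover have "(c1 + c2) ^ 2 - 4 * (c1 * c2) - D ^ 2 = 0"
    by (simp add: D_def power2_eq_square algebra_simps)
  ultimately have "((\<lambda>z. S z ^ 2 - 4 * P z - D ^ 2) \<longlongrightarrow> 0) F"
    by simp
  then have "((\<lambda>z. sqrt (cmod (S z ^ 2 - 4 * P z - D ^ 2))) \<longlongrightarrow> sqrt (cmod 0)) F"
    by (intro tendsto_intros)
  then have "((\<lambda>z. w z - D) \<longlongrightarrow> 0) F"
    by (intro Lim_null_comparison[OF always_eventually[OF allI[OF near]]]) simp
  then have w_lim: "(w \<longlongrightarrow> D) F"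
    using tendsto_add[OF _ tendsto_const[of D]] by fastforce
  define x1 where "x1 z = (S z + w z) / 2" for z
  define x2 where "x2 z = (S z - w z) / 2" for z
  have "(x1 \<longlongrightarrow> (c1 + c2 + D) / 2) F" "(x2 \<longlongrightarrow> (c1 + c2 - D) / 2) F"
    unfolding x1_def x2_def by (auto intro!: tendsto_intros S w_lim)
  then have "(x1 \<longlongrightarrow> c1) F" "(x2 \<longlongrightarrow> c2) F"
    by (simp_all add: D_def)
  moreover have "x1 z + x2 z = S z \<and> x1 z * x2 z = P z" for z
  proof -
    have "x1 z * x2 z = (S z ^ 2 - w z ^ 2) / 4"
      unfolding x1_def x2_def by (simp add: power2_eq_square field_simps)
    also have "\<dots> = P z" by (simp add: w)
    finally show ?thesis by (simp add: x1_def x2_def add_divide_distrib[symmetric])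
  qed
  ultimately show ?thesis by blast
qed

lemma chi_3_sum_prod:
  fixes h :: real
  assumes h: "0 < h" "h < 1"
  shows "chi 3 1 h + chi 3 2 h = - ((1 + h)^2 - 3 * h^2) / h^2" "chi 3 1 h * chi 3 2 h = (h - 1)^2 / h^2"
proof -
  define x where "x = (h - 1) * h"
  define u where "u = sqrt (1 - 4 * (h - 1) * h)"
  have xn: "x < 0" using h by (simp add: x_def mult_neg_pos)
  have u2: "u^2 = 1 - 4 * x" unfolding u_def x_def using xn[unfolded x_def]
    by (simp add: algebra_simps)
  define D1 where "D1 = 2 * x - 1 + u"
  define D2 where "D2 = 2 * x - 1 - u"
  have c1: "chi 3 1 h = 2 * (h - 1)^2 / D1" by (simp add: chi_def D1_def x_def u_def)
  have c2: "chi 3 2 h = 2 * (h - 1)^2 / D2" by (simp add: chi_def D2_def x_def u_def)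
  have P: "D1 * D2 = 4 * x^2" unfolding D1_def D2_def using u2 by (simp add: algebra_simps power2_eq_square)
  have "x \<noteq> 0" using xn by simp
  hence "D1 * D2 \<noteq> 0" unfolding P by simp
  hence n1: "D1 \<noteq> 0" and n2: "D2 \<noteq> 0" by auto
  have hx: "h \<noteq> 0" "h - 1 \<noteq> 0" using h by auto
  have "chi 3 1 h + chi 3 2 h = 2 * (h - 1)^2 * (D1 + D2) / (D1 * D2)"
    unfolding c1 c2 using n1 n2 by (simp add: field_simps)
  also have "\<dots> = 2 * (h - 1)^2 * (4 * x - 2) / (4 * x^2)" unfolding P by (simp add: D1_def D2_def)
  also have "\<dots> = - ((1 + h)^2 - 3 * h^2) / h^2"
    using hx \<open>x \<noteq> 0\<close> by (subst frac_eq_eq) (simp_all add: x_def, algebra)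
  finally show "chi 3 1 h + chi 3 2 h = - ((1 + h)^2 - 3 * h^2) / h^2" .
  have "chi 3 1 h * chi 3 2 h = 4 * (h - 1)^4 / (D1 * D2)"
    unfolding c1 c2 by (simp add: power2_eq_square power4_eq_xxxx)
  also have "\<dots> = (h - 1)^2 / h^2"
    unfolding P using hx \<open>x \<noteq> 0\<close> by (subst frac_eq_eq) (simp_all add: x_def, algebra)
  finally show "chi 3 1 h * chi 3 2 h = (h - 1)^2 / h^2" .
qed

lemma has_MA_expansion_3_0:
  fixes a b c :: "real \<Rightarrow> complex"
  assumes "\<sigma> > 0" and "0 < h" "h < 1"
    and a: "((\<lambda>\<Delta>. a \<Delta> / of_real \<Delta> ^ 2) \<longlongrightarrow> of_real (\<sigma> * h ^ 2 / 2)) (at_right 0)"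
    and b: "((\<lambda>\<Delta>. b \<Delta> / of_real \<Delta> ^ 2) \<longlongrightarrow> of_real (\<sigma> * ((1 + h) ^ 2 - 3 * h ^ 2) / 2)) (at_right 0)"
    and c: "((\<lambda>\<Delta>. c \<Delta> / of_real \<Delta> ^ 2) \<longlongrightarrow> of_real (\<sigma> * (h - 1) ^ 2 / 2)) (at_right 0)"
  shows "has_MA_expansion 3 0 \<sigma> h mu (\<lambda>\<Delta>. [:a \<Delta>, b \<Delta>, c \<Delta>:])"
proof -
  have nz: "of_real (\<sigma> * h ^ 2 / 2) \<noteq> (0 :: complex)"
    using assms by simp
  have "(\<sigma> * ((1 + h) ^ 2 - 3 * h ^ 2) / 2) / (\<sigma> * h ^ 2 / 2) = - (chi 3 1 h + chi 3 2 h)"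
    "(\<sigma> * (h - 1) ^ 2 / 2) / (\<sigma> * h ^ 2 / 2) = chi 3 1 h * chi 3 2 h"
    unfolding chi_3_sum_prod[OF \<open>0 < h\<close> \<open>h < 1\<close>] using assms by (simp_all add: field_simps)
  then have S: "((\<lambda>\<Delta>. - (b \<Delta> / a \<Delta>)) \<longlongrightarrow> of_real (chi 3 1 h) + of_real (chi 3 2 h)) (at_right 0)"
    and P: "((\<lambda>\<Delta>. c \<Delta> / a \<Delta>) \<longlongrightarrow> of_real (chi 3 1 h) * of_real (chi 3 2 h)) (at_right 0)"
    using tendsto_minus[OF tendsto_ratio_of_real_at_right[OF b a]] tendsto_ratio_of_real_at_right[OF c a]
      assms by (simp_all add: add.commute)
  obtain r1 r2 where r: "\<And>\<Delta>. r1 \<Delta> + r2 \<Delta> = - (b \<Delta> / a \<Delta>) \<and> r1 \<Delta> * r2 \<Delta> = c \<Delta> / a \<Delta>"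
    and r1: "(r1 \<longlongrightarrow> of_real (chi 3 1 h)) (at_right 0)" and r2: "(r2 \<longlongrightarrow> of_real (chi 3 2 h)) (at_right 0)"
    using quadratic_roots_tendsto[OF S P] by blast
  define \<eta> :: "nat \<Rightarrow> real \<Rightarrow> complex"
    where "\<eta> = (\<lambda>i \<Delta>. (if i = 1 then r1 \<Delta> else r2 \<Delta>) - of_real (chi 3 i h))"
  have one_to_two: "{1..2::nat} = {1, 2}"
    by auto
  have "(\<eta> i \<longlongrightarrow> 0) (at_right 0)" if "i \<in> {1..2}" for i
  proof -
    from that have "i = 1 \<or> i = 2" by auto
    then show ?thesis
      unfolding \<eta>_def using LIM_zero[OF r1] LIM_zero[OF r2] by auto
  qed
  moreover have "\<forall>\<^sub>F \<Delta> in at_right 0. [:a \<Delta>, b \<Delta>, c \<Delta>:] =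
      smult (a \<Delta>) (\<Prod>i\<in>{1..2}. [:1, - (of_real (chi 3 i h) + \<eta> i \<Delta>):])"
    using eventually_nonzero_at_right[OF a nz]
  proof eventually_elim
    case (elim \<Delta>)
    then have "[:a \<Delta>, b \<Delta>, c \<Delta>:] = smult (a \<Delta>) [:1, - (r1 \<Delta> + r2 \<Delta>), r1 \<Delta> * r2 \<Delta>:]"
      by (simp add: r)
    then show ?case
      unfolding one_to_two by (simp add: \<eta>_def algebra_simps)
  qed
  ultimately show ?thesis
    using assms a
    by (intro has_MA_expansionI[where a = a and \<eta> = \<eta>]) simp_all
qed

lemma tendsto_slope_root_near_one:
  fixes r1 r2 G :: "real \<Rightarrow> complex"
  assumes r2: "((\<lambda>\<Delta>. 1 - r2 \<Delta>) \<longlongrightarrow> L) (at_right 0)" and "L \<noteq> 0"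
    and G: "\<forall>\<^sub>F \<Delta> in at_right 0. (1 - r1 \<Delta>) * (1 - r2 \<Delta>) = G \<Delta>"
    and "((\<lambda>\<Delta>. G \<Delta> / of_real \<Delta>) \<longlongrightarrow> M) (at_right 0)"
  shows "((\<lambda>\<Delta>. (1 - r1 \<Delta>) / of_real \<Delta>) \<longlongrightarrow> M / L) (at_right 0)"
proof -
  have "((\<lambda>\<Delta>. (G \<Delta> / of_real \<Delta>) / (1 - r2 \<Delta>)) \<longlongrightarrow> M / L) (at_right 0)"
    using assms by (intro tendsto_divide)
  moreover have "\<forall>\<^sub>F \<Delta> in at_right 0. (G \<Delta> / of_real \<Delta>) / (1 - r2 \<Delta>) = (1 - r1 \<Delta>) / of_real \<Delta>"
    using G tendsto_imp_eventually_ne[OF r2 \<open>L \<noteq> 0\<close>] eventually_at_right_less[of 0]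
  proof eventually_elim
    case (elim \<Delta>)
    show ?case
      unfolding elim(1)[symmetric] using elim(2,3) by (simp add: field_simps)
  qed
  ultimately show ?thesis
    by (simp add: tendsto_cong)
qed

lemma has_MA_expansion_3_1:
  fixes a b c :: "real \<Rightarrow> complex"
  assumes "\<sigma> > 0" and "0 < h"
    and a: "((\<lambda>\<Delta>. a \<Delta> / of_real \<Delta>) \<longlongrightarrow> of_real (\<sigma> * h)) (at_right 0)"
    and b: "((\<lambda>\<Delta>. b \<Delta> / of_real \<Delta>) \<longlongrightarrow> of_real (\<sigma> * (1 - 2 * h))) (at_right 0)"
    and c: "((\<lambda>\<Delta>. c \<Delta> / of_real \<Delta>) \<longlongrightarrow> of_real (\<sigma> * (h - 1))) (at_right 0)"
    and abc: "((\<lambda>\<Delta>. (a \<Delta> + b \<Delta> + c \<Delta>) / of_real \<Delta> ^ 2) \<longlongrightarrow> of_real \<sigma> * mu 0) (at_right 0)"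
  shows "has_MA_expansion 3 1 \<sigma> h mu (\<lambda>\<Delta>. [:a \<Delta>, b \<Delta>, c \<Delta>:])"
proof -
  have a1: "((\<lambda>\<Delta>. a \<Delta> / of_real \<Delta> ^ 1) \<longlongrightarrow> of_real (\<sigma> * h)) (at_right 0)"
    and b1: "((\<lambda>\<Delta>. b \<Delta> / of_real \<Delta> ^ 1) \<longlongrightarrow> of_real (\<sigma> * (1 - 2 * h))) (at_right 0)"
    and c1: "((\<lambda>\<Delta>. c \<Delta> / of_real \<Delta> ^ 1) \<longlongrightarrow> of_real (\<sigma> * (h - 1))) (at_right 0)"
    using a b c by simp_all
  have nz: "of_real (\<sigma> * h) \<noteq> (0 :: complex)"
    using assms by simp
  have "(\<sigma> * (1 - 2 * h)) / (\<sigma> * h) = - (1 + chi 2 1 h)" "(\<sigma> * (h - 1)) / (\<sigma> * h) = chi 2 1 h"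
    using assms by (simp_all add: chi_def field_simps)
  then have S: "((\<lambda>\<Delta>. - (b \<Delta> / a \<Delta>)) \<longlongrightarrow> 1 + of_real (chi 2 1 h)) (at_right 0)"
    and P: "((\<lambda>\<Delta>. c \<Delta> / a \<Delta>) \<longlongrightarrow> 1 * of_real (chi 2 1 h)) (at_right 0)"
    using tendsto_minus[OF tendsto_ratio_of_real_at_right[OF b1 a1]] tendsto_ratio_of_real_at_right[OF c1 a1]
      assms by (simp_all add: add.commute)
  obtain r1 r2 where r: "\<And>\<Delta>. r1 \<Delta> + r2 \<Delta> = - (b \<Delta> / a \<Delta>) \<and> r1 \<Delta> * r2 \<Delta> = c \<Delta> / a \<Delta>"
    and r1: "(r1 \<longlongrightarrow> 1) (at_right 0)" and r2: "(r2 \<longlongrightarrow> of_real (chi 2 1 h)) (at_right 0)"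
    using quadratic_roots_tendsto[OF S P] by blast
  have "1 - of_real (chi 2 1 h) = (1 / of_real h :: complex)"
    using assms by (simp add: chi_def field_simps)
  then have r2': "((\<lambda>\<Delta>. 1 - r2 \<Delta>) \<longlongrightarrow> 1 / of_real h) (at_right 0)"
    using tendsto_diff[OF tendsto_const r2, of 1] by simp
  txt \<open>The root near 1 is \<open>1 - \<Delta> y\<close>, and \<open>y\<close> is read off from
    \<open>(1 - r\<^sub>1) (1 - r\<^sub>2) = (a + b + c) / a\<close>, which is of order \<open>\<Delta>\<close>.\<close>
  define y where "y \<Delta> = (1 - r1 \<Delta>) / of_real \<Delta>" for \<Delta>
  have G_eq: "\<forall>\<^sub>F \<Delta> in at_right 0. (1 - r1 \<Delta>) * (1 - r2 \<Delta>) = (a \<Delta> + b \<Delta> + c \<Delta>) / a \<Delta>"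
    using eventually_nonzero_at_right[OF a1 nz]
  proof eventually_elim
    case (elim \<Delta>)
    have "(1 - r1 \<Delta>) * (1 - r2 \<Delta>) = 1 - (r1 \<Delta> + r2 \<Delta>) + r1 \<Delta> * r2 \<Delta>"
      by (simp add: algebra_simps)
    also have "\<dots> = (a \<Delta> + b \<Delta> + c \<Delta>) / a \<Delta>"
      using r[of \<Delta>] elim by (simp add: field_simps)
    finally show ?case .
  qed
  have G_lim: "((\<lambda>\<Delta>. ((a \<Delta> + b \<Delta> + c \<Delta>) / a \<Delta>) / of_real \<Delta>) \<longlongrightarrow> mu 0 / of_real h) (at_right 0)"
  proof -
    have "((\<lambda>\<Delta>. ((a \<Delta> + b \<Delta> + c \<Delta>) / of_real \<Delta> ^ 2) / (a \<Delta> / of_real \<Delta>))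
        \<longlongrightarrow> (of_real \<sigma> * mu 0) / of_real (\<sigma> * h)) (at_right 0)"
      using nz by (intro tendsto_divide abc a)
    moreover have "\<forall>\<^sub>F \<Delta> in at_right 0. ((a \<Delta> + b \<Delta> + c \<Delta>) / of_real \<Delta> ^ 2) / (a \<Delta> / of_real \<Delta>)
        = ((a \<Delta> + b \<Delta> + c \<Delta>) / a \<Delta>) / of_real \<Delta>"
      using eventually_at_right_less[of 0] by eventually_elim (simp add: power2_eq_square)
    ultimately show ?thesis
      using assms by (simp add: tendsto_cong)
  qed
  have "(y \<longlongrightarrow> (mu 0 / of_real h) / (1 / of_real h)) (at_right 0)"
    unfolding y_def by (rule tendsto_slope_root_near_one[OF r2' _ G_eq G_lim]) (use assms in simp)
  then have y: "(y \<longlongrightarrow> mu 0) (at_right 0)"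
    using assms by simp
  define \<epsilon> :: "nat \<Rightarrow> real \<Rightarrow> complex" where "\<epsilon> = (\<lambda>i \<Delta>. mu 0 - y \<Delta>)"
  define \<eta> :: "nat \<Rightarrow> real \<Rightarrow> complex" where "\<eta> = (\<lambda>i \<Delta>. r2 \<Delta> - of_real (chi 2 1 h))"
  have "(\<epsilon> i \<longlongrightarrow> 0) (at_right 0)" "(\<eta> i \<longlongrightarrow> 0) (at_right 0)" for i
    unfolding \<epsilon>_def \<eta>_def using LIM_zero[OF r2] tendsto_minus[OF LIM_zero[OF y]] by simp_all
  moreover have "\<forall>\<^sub>F \<Delta> in at_right 0. [:a \<Delta>, b \<Delta>, c \<Delta>:] =
      smult (a \<Delta>) ((\<Prod>i<1. [:1, - (1 - of_real \<Delta> * mu i + of_real \<Delta> * \<epsilon> i \<Delta>):]) *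
                     (\<Prod>i\<in>{1..1}. [:1, - (of_real (chi 2 i h) + \<eta> i \<Delta>):]))"
    using eventually_nonzero_at_right[OF a1 nz]
  proof eventually_elim
    case (elim \<Delta>)
    then have "[:a \<Delta>, b \<Delta>, c \<Delta>:] = smult (a \<Delta>) [:1, - (r1 \<Delta> + r2 \<Delta>), r1 \<Delta> * r2 \<Delta>:]"
      by (simp add: r)
    then show ?case
      using elim by (simp add: \<epsilon>_def \<eta>_def y_def algebra_simps) (simp add: field_simps)
  qed
  ultimately show ?thesis
    using assms a by (intro has_MA_expansionI[where a = a and \<epsilon> = \<epsilon> and \<eta> = \<eta>]) simp_all
qed

lemma has_MA_expansion_3_2:
  fixes a b c :: "real \<Rightarrow> complex"
  assumes "\<sigma> > 0" and "h > 0"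
    and a: "(a \<longlongrightarrow> of_real \<sigma>) (at_right 0)"
    and ab: "((\<lambda>\<Delta>. (2 * a \<Delta> + b \<Delta>) / of_real \<Delta>) \<longlongrightarrow> of_real \<sigma> * (mu 0 + mu 1)) (at_right 0)"
    and abc: "((\<lambda>\<Delta>. (a \<Delta> + b \<Delta> + c \<Delta>) / of_real \<Delta> ^ 2) \<longlongrightarrow> of_real \<sigma> * (mu 0 * mu 1)) (at_right 0)"
  shows "has_MA_expansion 3 2 \<sigma> h mu (\<lambda>\<Delta>. [:a \<Delta>, b \<Delta>, c \<Delta>:])"
proof -
  have a0: "((\<lambda>\<Delta>. a \<Delta> / of_real \<Delta> ^ 0) \<longlongrightarrow> of_real \<sigma>) (at_right 0)"
    using a by simp
  have nz: "of_real \<sigma> \<noteq> (0 :: complex)"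
    using assms by simp
  txt \<open>Both roots are of the form \<open>1 - \<Delta> y\<close>; the \<open>y\<close>'s solve a quadratic whose
    coefficients converge to those of \<open>(y - \<mu>\<^sub>0) (y - \<mu>\<^sub>1)\<close>.\<close>
  define S where "S \<Delta> = ((2 * a \<Delta> + b \<Delta>) / of_real \<Delta>) / a \<Delta>" for \<Delta>
  define P where "P \<Delta> = ((a \<Delta> + b \<Delta> + c \<Delta>) / of_real \<Delta> ^ 2) / a \<Delta>" for \<Delta>
  have "(S \<longlongrightarrow> of_real \<sigma> * (mu 0 + mu 1) / of_real \<sigma>) (at_right 0)"
    unfolding S_def using nz by (intro tendsto_intros ab a)
  then have S: "(S \<longlongrightarrow> mu 0 + mu 1) (at_right 0)"
    using nz by simp
  have "(P \<longlongrightarrow> of_real \<sigma> * (mu 0 * mu 1) / of_real \<sigma>) (at_right 0)"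
    unfolding P_def using nz by (intro tendsto_intros abc a)
  then have P: "(P \<longlongrightarrow> mu 0 * mu 1) (at_right 0)"
    using nz by simp
  obtain y1 y2 where y: "\<And>\<Delta>. y1 \<Delta> + y2 \<Delta> = S \<Delta> \<and> y1 \<Delta> * y2 \<Delta> = P \<Delta>"
    and y1: "(y1 \<longlongrightarrow> mu 0) (at_right 0)" and y2: "(y2 \<longlongrightarrow> mu 1) (at_right 0)"
    using quadratic_roots_tendsto[OF S P] by blast
  define \<epsilon> :: "nat \<Rightarrow> real \<Rightarrow> complex" where "\<epsilon> = (\<lambda>i \<Delta>. mu i - (if i = 0 then y1 \<Delta> else y2 \<Delta>))"
  have "(\<epsilon> i \<longlongrightarrow> 0) (at_right 0)" if "i < 2" for i
  proof -
    from that have "i = 0 \<or> i = 1" by auto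
    then show ?thesis
      unfolding \<epsilon>_def using tendsto_diff[OF tendsto_const y1, of "mu 0"] tendsto_diff[OF tendsto_const y2, of "mu 1"]
      by auto
  qed
  moreover have "\<forall>\<^sub>F \<Delta> in at_right 0. [:a \<Delta>, b \<Delta>, c \<Delta>:] =
      smult (a \<Delta>) (\<Prod>i<2. [:1, - (1 - of_real \<Delta> * mu i + of_real \<Delta> * \<epsilon> i \<Delta>):])"
    using eventually_nonzero_at_right[OF a0 nz]
  proof eventually_elim
    case (elim \<Delta>)
    then have "of_real \<Delta> \<noteq> (0 :: complex)" by simp
    have "(\<Prod>i<2. [:1, - (1 - of_real \<Delta> * mu i + of_real \<Delta> * \<epsilon> i \<Delta>):])
        = [:1, - (1 - of_real \<Delta> * y1 \<Delta>):] * [:1, - (1 - of_real \<Delta> * y2 \<Delta>):]"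
      by (simp add: numeral_2_eq_2 \<epsilon>_def algebra_simps)
    also have "\<dots> = [:1, - (2 - of_real \<Delta> * S \<Delta>), 1 - of_real \<Delta> * S \<Delta> + of_real \<Delta> ^ 2 * P \<Delta>:]"
    proof -
      have "S \<Delta> = y1 \<Delta> + y2 \<Delta>" "P \<Delta> = y1 \<Delta> * y2 \<Delta>"
        using y[of \<Delta>] by auto
      then show ?thesis
        by (simp add: algebra_simps power2_eq_square)
    qed
    finally show ?case
      using elim \<open>of_real \<Delta> \<noteq> 0\<close> by (simp add: S_def P_def field_simps power2_eq_square)
  qed
  ultimately show ?thesis
    using assms a by (intro has_MA_expansionI[where a = a and \<epsilon> = \<epsilon>]) simp_all
qed

section \<open>The CARMA cases\<close>

lemma MA_poly_2: "MA_poly lam 2 g h = (\<lambda>\<Delta>. [:MA_coeff lam 2 g h \<Delta> 0, MA_coeff lam 2 g h \<Delta> 1:])"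
  by (simp add: fun_eq_iff MA_poly_def numeral_2_eq_2)

lemma MA_poly_3:
  "MA_poly lam 3 g h = (\<lambda>\<Delta>. [:MA_coeff lam 3 g h \<Delta> 0, MA_coeff lam 3 g h \<Delta> 1, MA_coeff lam 3 g h \<Delta> 2:])"
  by (simp add: fun_eq_iff MA_poly_def eval_nat_numeral)

lemma has_MA_expansion_carma_2_0:
  assumes "lam 0 \<noteq> lam 1" and "\<sigma> > 0" and "0 < h"
  shows "has_MA_expansion 2 0 \<sigma> h mu (MA_poly lam 2 (carma_kernel \<sigma> (carma_a lam 2) (carma_b mu 0)) h)"
proof -
  define g where "g = carma_kernel \<sigma> (carma_a lam 2) (carma_b mu 0)"
  define V where "V = lam 0 - lam 1"
  define c where "c = of_real \<sigma> / V"
  define L where "L = MA_list lam 2 [(1, lam 0), (- 1, lam 1)] h"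
  define \<theta> where "\<theta> j \<Delta> = MA_coeff lam 2 g h \<Delta> j" for j \<Delta>
  have "V \<noteq> 0"
    using assms by (simp add: V_def)
  have \<theta>: "\<theta> j \<Delta> = c * exp_sum (L j) (of_real \<Delta>)" if "\<Delta> > 0" for j \<Delta>
    unfolding \<theta>_def L_def using that assms
    by (intro MA_coeff_exp_sum) (simp_all add: g_def c_def V_def carma_kernel_2 carma_b_def)
  have mom: "exp_moment (L 0) 0 = 0" "exp_moment (L 0) 1 = of_real h * V"
    "exp_moment (L 1) 0 = 0" "exp_moment (L 1) 1 = (1 - of_real h) * V"
    unfolding L_def V_def
    by (simp_all add: MA_list_def exp_moment_def exp_list_mult_def exp_list_dilate_def eval_nat_numeral;
        algebra)+
  have "((\<lambda>\<Delta>. \<theta> 0 \<Delta> / of_real \<Delta> ^ 1) \<longlongrightarrow> c * exp_moment (L 0) 1 / fact 1) (at_right 0)"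
    using \<theta> mom by (intro tendsto_exp_sum_div_power_at_right) auto
  then have a: "((\<lambda>\<Delta>. \<theta> 0 \<Delta> / of_real \<Delta>) \<longlongrightarrow> of_real (\<sigma> * h)) (at_right 0)"
    using \<open>V \<noteq> 0\<close> unfolding mom c_def by simp
  have "((\<lambda>\<Delta>. \<theta> 1 \<Delta> / of_real \<Delta> ^ 1) \<longlongrightarrow> c * exp_moment (L 1) 1 / fact 1) (at_right 0)"
    using \<theta> mom by (intro tendsto_exp_sum_div_power_at_right) auto
  then have b: "((\<lambda>\<Delta>. \<theta> 1 \<Delta> / of_real \<Delta>) \<longlongrightarrow> of_real (\<sigma> * (1 - h))) (at_right 0)"
    using \<open>V \<noteq> 0\<close> unfolding mom c_def by simp
  show ?thesis
    using has_MA_expansion_2_0[where a = \<open>\<theta> 0\<close> and b = \<open>\<theta> 1\<close> and mu = mu, OF assms(2,3) a b] by (simp add: MA_poly_2 \<theta>_def g_def)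
qed

lemma has_MA_expansion_carma_2_1:
  assumes "lam 0 \<noteq> lam 1" and "\<sigma> > 0" and "0 < h"
  shows "has_MA_expansion 2 1 \<sigma> h mu (MA_poly lam 2 (carma_kernel \<sigma> (carma_a lam 2) (carma_b mu 1)) h)"
proof -
  define b where "b = carma_b mu 1"
  define g where "g = carma_kernel \<sigma> (carma_a lam 2) b"
  define V where "V = lam 0 - lam 1"
  define c where "c = of_real \<sigma> / V"
  define L where "L = MA_list lam 2 [(poly b (lam 0), lam 0), (- poly b (lam 1), lam 1)] h"
  define \<theta> where "\<theta> j \<Delta> = MA_coeff lam 2 g h \<Delta> j" for j \<Delta>
  have "V \<noteq> 0"
    using assms by (simp add: V_def)
  have \<theta>: "\<theta> j \<Delta> = c * exp_sum (L j) (of_real \<Delta>)" if "\<Delta> > 0" for j \<Delta>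
    unfolding \<theta>_def L_def using that assms
    by (intro MA_coeff_exp_sum) (simp_all add: g_def c_def V_def carma_kernel_2)
  have mom: "exp_moment (L 0) 0 = V" "exp_moment (L 0 @ L 1) 0 = 0" "exp_moment (L 0 @ L 1) 1 = mu 0 * V"
    unfolding L_def V_def b_def
    by (simp_all add: MA_list_def exp_moment_def exp_list_mult_def exp_list_dilate_def eval_nat_numeral
        carma_b_def; algebra)+
  have "((\<lambda>\<Delta>. \<theta> 0 \<Delta> / of_real \<Delta> ^ 0) \<longlongrightarrow> c * exp_moment (L 0) 0 / fact 0) (at_right 0)"
    using \<theta> by (intro tendsto_exp_sum_div_power_at_right) auto
  then have a: "(\<theta> 0 \<longlongrightarrow> of_real \<sigma>) (at_right 0)"
    using \<open>V \<noteq> 0\<close> unfolding mom c_def by simp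
  have "((\<lambda>\<Delta>. (\<theta> 0 \<Delta> + \<theta> 1 \<Delta>) / of_real \<Delta> ^ 1) \<longlongrightarrow> c * exp_moment (L 0 @ L 1) 1 / fact 1) (at_right 0)"
    using \<theta> mom by (intro tendsto_exp_sum_div_power_at_right) (auto simp: distrib_left)
  then have ab: "((\<lambda>\<Delta>. (\<theta> 0 \<Delta> + \<theta> 1 \<Delta>) / of_real \<Delta>) \<longlongrightarrow> of_real \<sigma> * mu 0) (at_right 0)"
    using \<open>V \<noteq> 0\<close> unfolding mom c_def by simp
  show ?thesis
    using has_MA_expansion_2_1[where a = \<open>\<theta> 0\<close> and b = \<open>\<theta> 1\<close> and mu = mu, OF assms(2,3) a ab] by (simp add: MA_poly_2 \<theta>_def g_def b_def)
qed

lemma has_MA_expansion_carma_3_0: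
  assumes "lam 0 \<noteq> lam 1" "lam 0 \<noteq> lam 2" "lam 1 \<noteq> lam 2" and "\<sigma> > 0" and "0 < h" "h < 1"
  shows "has_MA_expansion 3 0 \<sigma> h mu (MA_poly lam 3 (carma_kernel \<sigma> (carma_a lam 3) (carma_b mu 0)) h)"
proof -
  define b where "b = carma_b mu 0"
  define g where "g = carma_kernel \<sigma> (carma_a lam 3) b"
  define V where "V = (lam 0 - lam 1) * (lam 0 - lam 2) * (lam 1 - lam 2)"
  define c where "c = of_real \<sigma> / V"
  define L where "L = MA_list lam 3 [((lam 1 - lam 2) * poly b (lam 0), lam 0),
    (- ((lam 0 - lam 2) * poly b (lam 1)), lam 1), ((lam 0 - lam 1) * poly b (lam 2), lam 2)] h"
  define \<theta> where "\<theta> j \<Delta> = MA_coeff lam 3 g h \<Delta> j" for j \<Delta>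
  have "V \<noteq> 0"
    using assms by (simp add: V_def)
  have \<theta>: "\<theta> j \<Delta> = c * exp_sum (L j) (of_real \<Delta>)" if "\<Delta> > 0" for j \<Delta>
    unfolding \<theta>_def L_def using that assms
    by (intro MA_coeff_exp_sum) (simp_all add: g_def c_def V_def carma_kernel_3)
  have mom: "exp_moment (L j) 0 = 0" "exp_moment (L j) 1 = 0" if "j \<le> 2" for j
  proof -
    from that have "j = 0 \<or> j = 1 \<or> j = 2" by auto
    then show "exp_moment (L j) 0 = 0" "exp_moment (L j) 1 = 0"
      unfolding L_def b_def
      by (auto simp: MA_list_def exp_moment_def exp_list_mult_def exp_list_dilate_def eval_nat_numeral
          carma_b_def algebra_simps)
  qed
  have mom2: "exp_moment (L 0) 2 = of_real h ^ 2 * V"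
    "exp_moment (L 1) 2 = ((1 + of_real h) ^ 2 - 3 * of_real h ^ 2) * V"
    "exp_moment (L 2) 2 = (of_real h - 1) ^ 2 * V"
    unfolding L_def V_def b_def
    by (simp_all add: MA_list_def exp_moment_def exp_list_mult_def exp_list_dilate_def eval_nat_numeral
        carma_b_def; algebra)+
  have lim: "((\<lambda>\<Delta>. \<theta> j \<Delta> / of_real \<Delta> ^ 2) \<longlongrightarrow> c * exp_moment (L j) 2 / fact 2) (at_right 0)"
    if "j \<le> 2" for j
    using \<theta> mom[OF that] by (intro tendsto_exp_sum_div_power_at_right) (auto simp: less_2_cases_iff)
  have a: "((\<lambda>\<Delta>. \<theta> 0 \<Delta> / of_real \<Delta> ^ 2) \<longlongrightarrow> of_real (\<sigma> * h ^ 2 / 2)) (at_right 0)"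
    using lim[of 0] \<open>V \<noteq> 0\<close> unfolding mom2 c_def by simp
  have b: "((\<lambda>\<Delta>. \<theta> 1 \<Delta> / of_real \<Delta> ^ 2) \<longlongrightarrow> of_real (\<sigma> * ((1 + h) ^ 2 - 3 * h ^ 2) / 2)) (at_right 0)"
    using lim[of 1] \<open>V \<noteq> 0\<close> unfolding mom2 c_def by simp
  have c: "((\<lambda>\<Delta>. \<theta> 2 \<Delta> / of_real \<Delta> ^ 2) \<longlongrightarrow> of_real (\<sigma> * (h - 1) ^ 2 / 2)) (at_right 0)"
    using lim[of 2] \<open>V \<noteq> 0\<close> unfolding mom2 c_def by simp
  show ?thesis
    using has_MA_expansion_3_0[where a = \<open>\<theta> 0\<close> and b = \<open>\<theta> 1\<close> and c = \<open>\<theta> 2\<close> and mu = mu,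
      OF assms(4-6) a b c] by (simp add: MA_poly_3 \<theta>_def g_def b_def)
qed

lemma has_MA_expansion_carma_3_1:
  assumes "lam 0 \<noteq> lam 1" "lam 0 \<noteq> lam 2" "lam 1 \<noteq> lam 2" and "\<sigma> > 0" and "0 < h"
  shows "has_MA_expansion 3 1 \<sigma> h mu (MA_poly lam 3 (carma_kernel \<sigma> (carma_a lam 3) (carma_b mu 1)) h)"
proof -
  define b where "b = carma_b mu 1"
  define g where "g = carma_kernel \<sigma> (carma_a lam 3) b"
  define V where "V = (lam 0 - lam 1) * (lam 0 - lam 2) * (lam 1 - lam 2)"
  define c where "c = of_real \<sigma> / V"
  define L where "L = MA_list lam 3 [((lam 1 - lam 2) * poly b (lam 0), lam 0),
    (- ((lam 0 - lam 2) * poly b (lam 1)), lam 1), ((lam 0 - lam 1) * poly b (lam 2), lam 2)] h"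
  define \<theta> where "\<theta> j \<Delta> = MA_coeff lam 3 g h \<Delta> j" for j \<Delta>
  have "V \<noteq> 0"
    using assms by (simp add: V_def)
  have \<theta>: "\<theta> j \<Delta> = c * exp_sum (L j) (of_real \<Delta>)" if "\<Delta> > 0" for j \<Delta>
    unfolding \<theta>_def L_def using that assms
    by (intro MA_coeff_exp_sum) (simp_all add: g_def c_def V_def carma_kernel_3)
  have mom: "exp_moment (L j) 0 = 0" if "j \<le> 2" for j
  proof -
    from that have "j = 0 \<or> j = 1 \<or> j = 2" by auto
    then show ?thesis
      unfolding L_def b_def
      by (auto simp: MA_list_def exp_moment_def exp_list_mult_def exp_list_dilate_def eval_nat_numeral
          carma_b_def algebra_simps)
  qed
  have mom1: "exp_moment (L 0) 1 = of_real h * V" "exp_moment (L 1) 1 = (1 - 2 * of_real h) * V"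
    "exp_moment (L 2) 1 = (of_real h - 1) * V"
    "exp_moment (L 0 @ L 1 @ L 2) 1 = 0" "exp_moment (L 0 @ L 1 @ L 2) 2 = 2 * mu 0 * V"
    unfolding L_def V_def b_def
    by (simp_all add: MA_list_def exp_moment_def exp_list_mult_def exp_list_dilate_def eval_nat_numeral
        carma_b_def; algebra)+
  have lim: "((\<lambda>\<Delta>. \<theta> j \<Delta> / of_real \<Delta> ^ 1) \<longlongrightarrow> c * exp_moment (L j) 1 / fact 1) (at_right 0)"
    if "j \<le> 2" for j
    using \<theta> mom[OF that] by (intro tendsto_exp_sum_div_power_at_right) auto
  have a: "((\<lambda>\<Delta>. \<theta> 0 \<Delta> / of_real \<Delta>) \<longlongrightarrow> of_real (\<sigma> * h)) (at_right 0)"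
    using lim[of 0] \<open>V \<noteq> 0\<close> unfolding mom1 c_def by simp
  have b: "((\<lambda>\<Delta>. \<theta> 1 \<Delta> / of_real \<Delta>) \<longlongrightarrow> of_real (\<sigma> * (1 - 2 * h))) (at_right 0)"
    using lim[of 1] \<open>V \<noteq> 0\<close> unfolding mom1 c_def by simp
  have c: "((\<lambda>\<Delta>. \<theta> 2 \<Delta> / of_real \<Delta>) \<longlongrightarrow> of_real (\<sigma> * (h - 1))) (at_right 0)"
    using lim[of 2] \<open>V \<noteq> 0\<close> unfolding mom1 c_def by simp
  have "((\<lambda>\<Delta>. (\<theta> 0 \<Delta> + \<theta> 1 \<Delta> + \<theta> 2 \<Delta>) / of_real \<Delta> ^ 2)
      \<longlongrightarrow> c * exp_moment (L 0 @ L 1 @ L 2) 2 / fact 2) (at_right 0)"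
    using \<theta> mom mom1 by (intro tendsto_exp_sum_div_power_at_right) (auto simp: less_2_cases_iff distrib_left)
  then have abc: "((\<lambda>\<Delta>. (\<theta> 0 \<Delta> + \<theta> 1 \<Delta> + \<theta> 2 \<Delta>) / of_real \<Delta> ^ 2) \<longlongrightarrow> of_real \<sigma> * mu 0) (at_right 0)"
    using \<open>V \<noteq> 0\<close> unfolding mom1 c_def by simp
  show ?thesis
    using has_MA_expansion_3_1[where a = \<open>\<theta> 0\<close> and b = \<open>\<theta> 1\<close> and c = \<open>\<theta> 2\<close> and mu = mu,
      OF assms(4,5) a b c abc] by (simp add: MA_poly_3 \<theta>_def g_def b_def)
qed

lemma has_MA_expansion_carma_3_2:
  assumes "lam 0 \<noteq> lam 1" "lam 0 \<noteq> lam 2" "lam 1 \<noteq> lam 2" and "\<sigma> > 0" and "0 < h"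
  shows "has_MA_expansion 3 2 \<sigma> h mu (MA_poly lam 3 (carma_kernel \<sigma> (carma_a lam 3) (carma_b mu 2)) h)"
proof -
  define b where "b = carma_b mu 2"
  define g where "g = carma_kernel \<sigma> (carma_a lam 3) b"
  define V where "V = (lam 0 - lam 1) * (lam 0 - lam 2) * (lam 1 - lam 2)"
  define c where "c = of_real \<sigma> / V"
  define L where "L = MA_list lam 3 [((lam 1 - lam 2) * poly b (lam 0), lam 0),
    (- ((lam 0 - lam 2) * poly b (lam 1)), lam 1), ((lam 0 - lam 1) * poly b (lam 2), lam 2)] h"
  define \<theta> where "\<theta> j \<Delta> = MA_coeff lam 3 g h \<Delta> j" for j \<Delta>
  have "V \<noteq> 0"
    using assms by (simp add: V_def)
  have \<theta>: "\<theta> j \<Delta> = c * exp_sum (L j) (of_real \<Delta>)" if "\<Delta> > 0" for j \<Delta>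
    unfolding \<theta>_def L_def using that assms
    by (intro MA_coeff_exp_sum) (simp_all add: g_def c_def V_def carma_kernel_3)
  have mom: "exp_moment (L 0) 0 = V"
    "exp_moment (L 0 @ L 0 @ L 1) 0 = 0" "exp_moment (L 0 @ L 0 @ L 1) 1 = (mu 0 + mu 1) * V"
    "exp_moment (L 0 @ L 1 @ L 2) 0 = 0" "exp_moment (L 0 @ L 1 @ L 2) 1 = 0"
    "exp_moment (L 0 @ L 1 @ L 2) 2 = 2 * mu 0 * mu 1 * V"
    unfolding L_def V_def b_def
    by (simp_all add: MA_list_def exp_moment_def exp_list_mult_def exp_list_dilate_def eval_nat_numeral
        carma_b_def; algebra)+
  have "((\<lambda>\<Delta>. \<theta> 0 \<Delta> / of_real \<Delta> ^ 0) \<longlongrightarrow> c * exp_moment (L 0) 0 / fact 0) (at_right 0)"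
    using \<theta> by (intro tendsto_exp_sum_div_power_at_right) auto
  then have a: "(\<theta> 0 \<longlongrightarrow> of_real \<sigma>) (at_right 0)"
    using \<open>V \<noteq> 0\<close> unfolding mom c_def by simp
  have "((\<lambda>\<Delta>. (2 * \<theta> 0 \<Delta> + \<theta> 1 \<Delta>) / of_real \<Delta> ^ 1) \<longlongrightarrow> c * exp_moment (L 0 @ L 0 @ L 1) 1 / fact 1)
      (at_right 0)"
    using \<theta> mom by (intro tendsto_exp_sum_div_power_at_right) (auto simp: algebra_simps)
  then have ab: "((\<lambda>\<Delta>. (2 * \<theta> 0 \<Delta> + \<theta> 1 \<Delta>) / of_real \<Delta>) \<longlongrightarrow> of_real \<sigma> * (mu 0 + mu 1)) (at_right 0)"
    using \<open>V \<noteq> 0\<close> unfolding mom c_def by simp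
  have "((\<lambda>\<Delta>. (\<theta> 0 \<Delta> + \<theta> 1 \<Delta> + \<theta> 2 \<Delta>) / of_real \<Delta> ^ 2)
      \<longlongrightarrow> c * exp_moment (L 0 @ L 1 @ L 2) 2 / fact 2) (at_right 0)"
    using \<theta> mom by (intro tendsto_exp_sum_div_power_at_right) (auto simp: less_2_cases_iff distrib_left)
  then have abc: "((\<lambda>\<Delta>. (\<theta> 0 \<Delta> + \<theta> 1 \<Delta> + \<theta> 2 \<Delta>) / of_real \<Delta> ^ 2) \<longlongrightarrow> of_real \<sigma> * (mu 0 * mu 1))
      (at_right 0)"
    using \<open>V \<noteq> 0\<close> unfolding mom c_def by simp
  show ?thesis
    using has_MA_expansion_3_2[where a = \<open>\<theta> 0\<close> and b = \<open>\<theta> 1\<close> and c = \<open>\<theta> 2\<close> and mu = mu,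
      OF assms(4,5) a ab abc] by (simp add: MA_poly_3 \<theta>_def g_def b_def)
qed

lemma has_MA_expansion_carma:
  assumes "p \<in> {2, 3}" and "q < p" and "inj_on lam {..<p}" and "\<sigma> > 0" and "0 < h" "h < 1"
  shows "has_MA_expansion p q \<sigma> h mu (MA_poly lam p (carma_kernel \<sigma> (carma_a lam p) (carma_b mu q)) h)"
proof -
  have inj: "lam i \<noteq> lam j" if "i < p" "j < p" "i \<noteq> j" for i j
    using \<open>inj_on lam {..<p}\<close> that by (auto dest: inj_onD)
  from \<open>p \<in> {2, 3}\<close> consider "p = 2" | "p = 3"
    by auto
  then show ?thesis
  proof cases
    case 1
    with \<open>q < p\<close> inj[of 0 1] have "q = 0 \<or> q = 1" "lam 0 \<noteq> lam 1"
      by auto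
    then show ?thesis
      using has_MA_expansion_carma_2_0 has_MA_expansion_carma_2_1 assms \<open>p = 2\<close> by auto
  next
    case 2
    with \<open>q < p\<close> inj[of 0 1] inj[of 0 2] inj[of 1 2]
    have "q = 0 \<or> q = 1 \<or> q = 2" "lam 0 \<noteq> lam 1" "lam 0 \<noteq> lam 2" "lam 1 \<noteq> lam 2"
      by auto
    then show ?thesis
      using has_MA_expansion_carma_3_0 has_MA_expansion_carma_3_1 has_MA_expansion_carma_3_2
        assms \<open>p = 3\<close>
      by auto
  qed
qed

lemma riemann_sum_MA_expansion:
  fixes g :: "real \<Rightarrow> complex"
  assumes expansion: "has_MA_expansion p q \<sigma> h mu (MA_poly lam p g h)"
    and g: "\<And>t. t > 0 \<Longrightarrow> g t = (\<Sum>i<p. B i * exp (lam i * of_real t))" and "h > 0"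
  shows "\<exists>\<theta>0 :: real \<Rightarrow> complex. \<exists>\<delta> :: real \<Rightarrow> complex.
       \<exists>\<epsilon> :: nat \<Rightarrow> real \<Rightarrow> complex. \<exists>\<eta> :: nat \<Rightarrow> real \<Rightarrow> complex.
         (\<delta> \<longlongrightarrow> 0) (at_right 0) \<and>
         (\<forall>i<q. (\<epsilon> i \<longlongrightarrow> 0) (at_right 0)) \<and>
         (\<forall>i\<in>{1..p - q - 1}. (\<eta> i \<longlongrightarrow> 0) (at_right 0)) \<and>
         (\<forall>\<^sub>F \<Delta> in at_right 0.
            \<theta>0 \<Delta> = of_real (\<sigma> * (h * \<Delta>) ^ (p - q - 1) / fact (p - q - 1)) * (1 + \<delta> \<Delta>) \<and>
            (\<forall>dL. riemann_summable g \<Delta> h dL \<longrightarrow>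
              (\<forall>n. poly_B (Phi_Delta lam p \<Delta>) (riemann_sum g \<Delta> h dL) n =
                   poly_B (smult (\<theta>0 \<Delta>)
                     ((\<Prod>i<q. [:1, - (1 - of_real \<Delta> * mu i + of_real \<Delta> * \<epsilon> i \<Delta>):]) *
                      (\<Prod>i\<in>{1..p - q - 1}. [:1, - (of_real (chi (p - q) i h) + \<eta> i \<Delta>):])))
                     (\<lambda>m. of_real (dL m)) n)))"
proof -
  obtain \<theta>0 \<delta> \<epsilon> \<eta> where limits: "(\<delta> \<longlongrightarrow> 0) (at_right 0)" "\<forall>i<q. (\<epsilon> i \<longlongrightarrow> 0) (at_right 0)"
      "\<forall>i\<in>{1..p - q - 1}. (\<eta> i \<longlongrightarrow> 0) (at_right 0)"
    and ev: "\<forall>\<^sub>F \<Delta> in at_right 0.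
           \<theta>0 \<Delta> = of_real (\<sigma> * (h * \<Delta>) ^ (p - q - 1) / fact (p - q - 1)) * (1 + \<delta> \<Delta>) \<and>
           MA_poly lam p g h \<Delta> = smult (\<theta>0 \<Delta>)
             ((\<Prod>i<q. [:1, - (1 - of_real \<Delta> * mu i + of_real \<Delta> * \<epsilon> i \<Delta>):]) *
              (\<Prod>i\<in>{1..p - q - 1}. [:1, - (of_real (chi (p - q) i h) + \<eta> i \<Delta>):]))"
    using expansion unfolding has_MA_expansion_def by blast
  from ev eventually_at_right_less[of 0]
  have "\<forall>\<^sub>F \<Delta> in at_right 0.
           \<theta>0 \<Delta> = of_real (\<sigma> * (h * \<Delta>) ^ (p - q - 1) / fact (p - q - 1)) * (1 + \<delta> \<Delta>) \<and>
           (\<forall>dL. riemann_summable g \<Delta> h dL \<longrightarrow>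
              (\<forall>n. poly_B (Phi_Delta lam p \<Delta>) (riemann_sum g \<Delta> h dL) n =
                   poly_B (smult (\<theta>0 \<Delta>)
                     ((\<Prod>i<q. [:1, - (1 - of_real \<Delta> * mu i + of_real \<Delta> * \<epsilon> i \<Delta>):]) *
                      (\<Prod>i\<in>{1..p - q - 1}. [:1, - (of_real (chi (p - q) i h) + \<eta> i \<Delta>):])))
                     (\<lambda>m. of_real (dL m)) n))"
  proof eventually_elim
    case (elim \<Delta>)
    then show ?case
      using Phi_Delta_riemann_sum[OF g _ \<open>h > 0\<close>, of \<Delta>] by auto
  qed
  with limits show ?thesis
    by blast
qed

theorem proposition4p5:
  fixes p q :: nat and \<sigma> h :: real and lam mu :: "nat \<Rightarrow> complex"
  defines "g \<equiv> carma_kernel \<sigma> (carma_a lam p) (carma_b mu q)"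
  assumes "q < p" and "p \<le> 3" and "\<sigma> > 0"
    and "\<forall>k. coeff (carma_a lam p) k \<in> \<real>"
    and "\<forall>k. coeff (carma_b mu q) k \<in> \<real>"
    and "\<forall>i<p. \<forall>j<q. lam i \<noteq> - mu j"
    and "\<forall>i<p. Re (lam i) < 0"
    and "\<forall>k<q. Re (mu k) \<noteq> 0"
    and "inj_on lam {..<p}"
    and "0 < h" and "h \<le> 1"
  shows
   "(p = 1 \<longrightarrow>
      (\<forall>\<Delta>>0. \<forall>dL. riemann_summable g \<Delta> h dL \<longrightarrow>
         (\<forall>n. riemann_sum g \<Delta> h dL n - exp (of_real \<Delta> * lam 0) * riemann_sum g \<Delta> h dL (n - 1)
              = of_real \<sigma> * exp (of_real (\<Delta> * h) * lam 0) * of_real (dL n))))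
  \<and> (p \<in> {2, 3} \<and> h < 1 \<longrightarrow>
      (\<exists>\<theta>0 :: real \<Rightarrow> complex. \<exists>\<delta> :: real \<Rightarrow> complex.
       \<exists>\<epsilon> :: nat \<Rightarrow> real \<Rightarrow> complex. \<exists>\<eta> :: nat \<Rightarrow> real \<Rightarrow> complex.
         (\<delta> \<longlongrightarrow> 0) (at_right 0) \<and>
         (\<forall>i<q. (\<epsilon> i \<longlongrightarrow> 0) (at_right 0)) \<and>
         (\<forall>i\<in>{1..p - q - 1}. (\<eta> i \<longlongrightarrow> 0) (at_right 0)) \<and>
         (\<forall>\<^sub>F \<Delta> in at_right 0.
            \<theta>0 \<Delta> = of_real (\<sigma> * (h * \<Delta>) ^ (p - q - 1) / fact (p - q - 1)) * (1 + \<delta> \<Delta>) \<and>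
            (\<forall>dL. riemann_summable g \<Delta> h dL \<longrightarrow>
              (\<forall>n. poly_B (Phi_Delta lam p \<Delta>) (riemann_sum g \<Delta> h dL) n =
                   poly_B (smult (\<theta>0 \<Delta>)
                     ((\<Prod>i<q. [:1, - (1 - of_real \<Delta> * mu i + of_real \<Delta> * \<epsilon> i \<Delta>):]) *
                      (\<Prod>i\<in>{1..p - q - 1}. [:1, - (of_real (chi (p - q) i h) + \<eta> i \<Delta>):])))
                     (\<lambda>m. of_real (dL m)) n)))))"
proof -
  have kernel: "g t = (\<Sum>i<p. of_real \<sigma> * poly (carma_b mu q) (lam i) / (\<Prod>k\<in>{..<p}-{i}. lam i - lam k)
      * exp (lam i * of_real t))" if "t > 0" for t
    unfolding g_def using \<open>inj_on lam {..<p}\<close> that by (rule carma_kernel_eq_sum_exp)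
  note MA_rule = riemann_sum_MA_expansion[OF _ kernel \<open>0 < h\<close>]
  show ?thesis
  proof (intro conjI impI MA_rule)
    assume "p = 1"
    with \<open>q < p\<close> have "p = 1" "q = 0" by auto
    then show "\<forall>\<Delta>>0. \<forall>dL. riemann_summable g \<Delta> h dL \<longrightarrow>
        (\<forall>n. riemann_sum g \<Delta> h dL n - exp (of_real \<Delta> * lam 0) * riemann_sum g \<Delta> h dL (n - 1)
           = of_real \<sigma> * exp (of_real (\<Delta> * h) * lam 0) * of_real (dL n))"
      using \<open>0 < h\<close> riemann_sum_AR1 by (simp add: g_def)
  next
    assume "p \<in> {2, 3} \<and> h < 1"
    then show "has_MA_expansion p q \<sigma> h mu (MA_poly lam p g h)"
      unfolding g_def using assms by (intro has_MA_expansion_carma) auto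
  qed
qed

end
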